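(* Let $a,b>0$ and let $p$ be a point of the flat Klein bottle $K_{a,b}$. Let $\sigma$ be the union of the two main geodesics of $K_{a,b}$, and put $\lambda=2d(p,\sigma)/b$; then $\lambda\in[0,1/2]$. <ol> <li>Assume $b<2a$. If $\lambda=0$, then $\#F_p=\#F_p^4=1$. If $\lambda\neq 0$, then $\#F_p=\#F_p^3=2$.</li> <li>Assume $b=2a$. If $\lambda=0$ or $\lambda=1/2$, then $\#F_p=\#F_p^4=1$. Otherwise $\#F_p=\#F_p^3=2$.</li> <li>Assume $b>2a$, and put $\lambda_0=\frac12-\sqrt{\frac14-\frac{a^2}{b^2}}$. <ol> <li>If $\lambda=0$, then $\#F_p=\#F_p^4=1$.</li> <li>If $0<\lambda<\lambda_0$, then $\#F_p=\#F_p^3=2$.</li> <li>If $\lambda=\lambda_0$, then $\#F_p=\#F_p^4=1$.</li> <li>If $\lambda_0<\lambda<1/2$, then $\#F_p=\#F_p^3=1$.</li> <li>If $\lambda=1/2$, then $\#F_p=\#F_p^3=2$.</li> </ol> </li> </ol>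
   Context: For $a,b>0$, $K_{a,b}$ is the flat Klein bottle obtained from an $a\times b$ rectangle by two identifications: the sides of length $a$ are identified by translation, and the sides of length $b$ are identified by the point symmetry about the center of the rectangle. Equivalently, $K_{a,b}=\mathbb{R}^2/G$, where $G$ is generated by $(x,y)\mapsto(x,y+b)$ and $(x,y)\mapsto(x+a,-y)$. It carries the induced intrinsic distance $d$. The $a$-direction is called horizontal. The horizontal closed geodesics all have length $2a$, except two of length $a$, which are called the main geodesics: <ul> <li>the one coming from the $a$-long sides of the rectangle;</li> <li>the one coming from the mid-height horizontal segment of the rectangle.</li> </ul> In the quotient model, the main geodesics are the images of the lines $y=nb/2$, $n\in\mathbb{Z}$. For a point $p$, $F_p$ is the set of points at maximal distance from $p$. A segment is a shortest path. $F_p^n$ is the set of farthest points from $p$ joined to $p$ by exactly $n$ distinct segments. $\#$ denotes cardinality. *)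

theory Defs
  imports "HOL-Analysis.Analysis"
begin

text \<open>The flat Klein bottle K_{a,b} = R^2 / G, with R^2 modelled as real \<times> real
  (whose dist is the Euclidean distance).\<close>

definition ktrans :: "real \<Rightarrow> real \<times> real \<Rightarrow> real \<times> real" where
  "ktrans b = (\<lambda>(x, y). (x, y + b))"

definition kglide :: "real \<Rightarrow> real \<times> real \<Rightarrow> real \<times> real" where
  "kglide a = (\<lambda>(x, y). (x + a, - y))"

inductive_set kgroup :: "real \<Rightarrow> real \<Rightarrow> (real \<times> real \<Rightarrow> real \<times> real) set"
  for a b :: real where
  kg_id: "id \<in> kgroup a b"
| kg_t: "g \<in> kgroup a b \<Longrightarrow> ktrans b \<circ> g \<in> kgroup a b"
| kg_tinv: "g \<in> kgroup a b \<Longrightarrow> inv (ktrans b) \<circ> g \<in> kgroup a b"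
| kg_s: "g \<in> kgroup a b \<Longrightarrow> kglide a \<circ> g \<in> kgroup a b"
| kg_sinv: "g \<in> kgroup a b \<Longrightarrow> inv (kglide a) \<circ> g \<in> kgroup a b"

definition korbit :: "real \<Rightarrow> real \<Rightarrow> real \<times> real \<Rightarrow> (real \<times> real) set" where
  "korbit a b z = {g z | g. g \<in> kgroup a b}"

definition klein :: "real \<Rightarrow> real \<Rightarrow> (real \<times> real) set set" where
  "klein a b = range (korbit a b)"

definition kdist :: "(real \<times> real) set \<Rightarrow> (real \<times> real) set \<Rightarrow> real" where
  "kdist P Q = Inf {dist u v | u v. u \<in> P \<and> v \<in> Q}"

text \<open>Segments (shortest paths) from P to Q, as curves [0,1] \<rightarrow> K_{a,b}:
  projections of straight segments in the cover of length d(P,Q).\<close>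
definition ksegments :: "real \<Rightarrow> real \<Rightarrow> (real \<times> real) set \<Rightarrow> (real \<times> real) set
    \<Rightarrow> (real \<Rightarrow> (real \<times> real) set) set" where
  "ksegments a b P Q = {(\<lambda>t\<in>{0..1}. korbit a b (u + t *\<^sub>R (v - u))) | u v.
      u \<in> P \<and> v \<in> Q \<and> dist u v = kdist P Q}"

definition kfar :: "real \<Rightarrow> real \<Rightarrow> (real \<times> real) set \<Rightarrow> (real \<times> real) set set" where
  "kfar a b P = {Q \<in> klein a b. \<forall>Q' \<in> klein a b. kdist P Q' \<le> kdist P Q}"

definition kfarn :: "real \<Rightarrow> real \<Rightarrow> nat \<Rightarrow> (real \<times> real) set \<Rightarrow> (real \<times> real) set set" where
  "kfarn a b n P = {Q \<in> kfar a b P. card (ksegments a b P Q) = n}"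

text \<open>Union of the two main geodesics: images of the lines y = n b / 2.\<close>
definition kmain :: "real \<Rightarrow> real \<Rightarrow> (real \<times> real) set set" where
  "kmain a b = {korbit a b (x, of_int n * b / 2) | x n. True}"

definition kdist_main :: "real \<Rightarrow> real \<Rightarrow> (real \<times> real) set \<Rightarrow> real" where
  "kdist_main a b P = Inf {kdist P Q | Q. Q \<in> kmain a b}"

end

theory Submission
  imports Defs
begin

text \<open>Up to the isometries of K_{a,b} induced by horizontal translations and by the reflection
  exchanging the two main geodesics, every point is the image p of (0, y0) with 0 \<le> y0 \<le> b/4,
  and then \<lambda> = 2 y0 / b. The distance from p to the image of w is the distance from w to the
  orbit of (0, y0). Cover a fundamental rectangle by triangles with vertices in this orbit:
  every point of such a triangle is closer than the circumradius to one of its vertices,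
  unless it is the circumcentre. Which triangles to take depends on the sign of
  e = a^2 - b^2 \<lambda> (1 - \<lambda>). For e \<ge> 0 the farthest points are the circumcentres c1, c2 of
  two triangles, exchanged by a half-turn; for e < 0 they are the circumcentre cU of an
  isosceles triangle and, when y0 = b/4, its mirror image cD. The segments to a farthest point
  correspond to the lifts of p on its circumcircle, and the case distinctions of the theorem
  are those of e = 0, y0 = 0 and y0 = b/4, expressed in \<lambda>.\<close>

section \<open>The group G and its orbits\<close>

definition kelem :: "real \<Rightarrow> real \<Rightarrow> int \<Rightarrow> int \<Rightarrow> bool \<Rightarrow> real \<times> real \<Rightarrow> real \<times> real" where
  "kelem a b k m s = (\<lambda>(x, y). if s then (x + (2 * of_int k + 1) * a, of_int m * b - y)
                                    else (x + 2 * of_int k * a, y + of_int m * b))"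

lemma kelem_Pair [simp]:
  "kelem a b k m s (x, y) = (if s then (x + (2 * of_int k + 1) * a, of_int m * b - y)
                                  else (x + 2 * of_int k * a, y + of_int m * b))"
  by (simp add: kelem_def)

lemma kelem_id: "kelem a b 0 0 False = id"
  by (auto simp: kelem_def)

lemma kelem_comp:
  "kelem a b k m s \<circ> kelem a b k' m' s' =
     kelem a b (k + k' + (if s \<and> s' then 1 else 0)) (if s then m - m' else m + m') (s \<noteq> s')"
  by (cases s; cases s') (auto simp: kelem_def algebra_simps)

lemma kelem_inverse: "\<exists>k' m' s'. \<forall>z. kelem a b k' m' s' (kelem a b k m s z) = z"
proof -
  have "kelem a b (if s then - k - 1 else - k) (if s then m else - m) s (kelem a b k m s z) = z"
    for z
    by (cases s; cases z) (simp_all add: algebra_simps)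
  then show ?thesis by blast
qed

lemma inv_ktrans: "inv (ktrans b) = (\<lambda>(x, y). (x, y - b))"
  by (rule inv_equality) (auto simp: ktrans_def)

lemma inv_kglide: "inv (kglide a) = (\<lambda>(x, y). (x - a, - y))"
  by (rule inv_equality) (auto simp: kglide_def)

lemma kgroup_imp_kelem: "g \<in> kgroup a b \<Longrightarrow> \<exists>k m s. g = kelem a b k m s"
proof (induction rule: kgroup.induct)
  case kg_id
  show ?case using kelem_id by metis
next
  case (kg_t g)
  then obtain k m s where "g = kelem a b k m s" by blast
  then have "ktrans b \<circ> g = kelem a b k (m + 1) s"
    by (auto simp: kelem_def ktrans_def algebra_simps)
  then show ?case by blast
next
  case (kg_tinv g)
  then obtain k m s where "g = kelem a b k m s" by blast
  then have "inv (ktrans b) \<circ> g = kelem a b k (m - 1) s"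
    by (auto simp: kelem_def inv_ktrans algebra_simps)
  then show ?case by blast
next
  case (kg_s g)
  then obtain k m s where "g = kelem a b k m s" by blast
  then have "kglide a \<circ> g = kelem a b (if s then k + 1 else k) (- m) (\<not> s)"
    by (auto simp: kelem_def kglide_def algebra_simps)
  then show ?case by blast
next
  case (kg_sinv g)
  then obtain k m s where "g = kelem a b k m s" by blast
  then have "inv (kglide a) \<circ> g = kelem a b (if s then k else k - 1) (- m) (\<not> s)"
    by (auto simp: kelem_def inv_kglide algebra_simps)
  then show ?case by blast
qed

lemma kelem_translation_in_kgroup: "kelem a b 0 m False \<in> kgroup a b"
proof (induction m rule: int_induct[where k = 0])
  case base
  show ?case unfolding kelem_id by (rule kgroup.kg_id)
next
  case (step1 i)
  have "kelem a b 0 (i + 1) False = ktrans b \<circ> kelem a b 0 i False"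
    by (auto simp: kelem_def ktrans_def algebra_simps)
  then show ?case using step1 kgroup.kg_t by metis
next
  case (step2 i)
  have "kelem a b 0 (i - 1) False = inv (ktrans b) \<circ> kelem a b 0 i False"
    by (auto simp: kelem_def inv_ktrans algebra_simps)
  then show ?case using step2 kgroup.kg_tinv by metis
qed

lemma kelem_in_kgroup: "kelem a b k m s \<in> kgroup a b"
proof -
  have even: "kelem a b k m False \<in> kgroup a b" for m
  proof (induction k arbitrary: m rule: int_induct[where k = 0])
    case base
    show ?case by (rule kelem_translation_in_kgroup)
  next
    case (step1 i)
    have "kelem a b (i + 1) m False = kglide a \<circ> (kglide a \<circ> kelem a b i m False)"
      by (auto simp: kelem_def kglide_def algebra_simps)
    then show ?case using step1 kgroup.kg_s by metis
  next
    case (step2 i)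
    have "kelem a b (i - 1) m False = inv (kglide a) \<circ> (inv (kglide a) \<circ> kelem a b i m False)"
      by (auto simp: kelem_def inv_kglide algebra_simps)
    then show ?case using step2 kgroup.kg_sinv by metis
  qed
  have "kelem a b k m True = kglide a \<circ> kelem a b k (- m) False"
    by (auto simp: kelem_def kglide_def algebra_simps)
  then show ?thesis using even kgroup.kg_s by (cases s) metis+
qed

lemma mem_korbit_iff: "w \<in> korbit a b z \<longleftrightarrow> (\<exists>k m s. w = kelem a b k m s z)"
  unfolding korbit_def using kgroup_imp_kelem kelem_in_kgroup by blast

lemma kelem_in_korbit [simp]: "kelem a b k m s z \<in> korbit a b z"
  unfolding mem_korbit_iff by blast

lemma self_in_korbit [simp]: "z \<in> korbit a b z"
  using kelem_in_korbit[of a b 0 0 False z] by (simp add: kelem_id)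

lemma kelem_kelem_in_korbit: "kelem a b k' m' s' (kelem a b k m s z) \<in> korbit a b z"
  by (metis comp_apply kelem_comp kelem_in_korbit)

lemma korbit_kelem [simp]: "korbit a b (kelem a b k m s z) = korbit a b z"
proof
  show "korbit a b (kelem a b k m s z) \<subseteq> korbit a b z"
  proof
    fix w assume "w \<in> korbit a b (kelem a b k m s z)"
    then obtain k' m' s' where "w = kelem a b k' m' s' (kelem a b k m s z)"
      unfolding mem_korbit_iff by blast
    then show "w \<in> korbit a b z" using kelem_kelem_in_korbit by metis
  qed
  obtain k' m' s' where inv: "\<And>z. kelem a b k' m' s' (kelem a b k m s z) = z"
    using kelem_inverse[of a b k m s] by blast
  show "korbit a b z \<subseteq> korbit a b (kelem a b k m s z)"
  proof
    fix w assume "w \<in> korbit a b z"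
    then obtain k'' m'' s''
      where "w = kelem a b k'' m'' s'' (kelem a b k' m' s' (kelem a b k m s z))"
      unfolding mem_korbit_iff inv by blast
    then show "w \<in> korbit a b (kelem a b k m s z)" using kelem_kelem_in_korbit by metis
  qed
qed

lemma korbit_eq_iff: "korbit a b w = korbit a b z \<longleftrightarrow> w \<in> korbit a b z"
  by (metis korbit_kelem mem_korbit_iff self_in_korbit)

lemma dist_kelem [simp]: "dist (kelem a b k m s u) (kelem a b k m s v) = dist u v"
  by (cases u; cases v) (auto simp: dist_Pair_Pair dist_real_def abs_minus_commute)

lemma kelem_affine:
  "kelem a b k m s (u + t *\<^sub>R (v - u))
    = kelem a b k m s u + t *\<^sub>R (kelem a b k m s v - kelem a b k m s u)"
  by (cases u; cases v) (auto simp: algebra_simps)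

lemma korbit_in_klein [simp]: "korbit a b z \<in> klein a b"
  unfolding klein_def by simp

lemma klein_eq_korbit: "Q \<in> klein a b \<Longrightarrow> c \<in> Q \<Longrightarrow> Q = korbit a b c"
  unfolding klein_def using korbit_eq_iff by blast

section \<open>Distances and segments in K_{a,b}\<close>

lemma kdist_korbit:
  "kdist (korbit a b z) (korbit a b w) = Inf {dist u w | u. u \<in> korbit a b z}"
proof -
  have "{dist u v | u v. u \<in> korbit a b z \<and> v \<in> korbit a b w} = {dist u w | u. u \<in> korbit a b z}"
  proof (intro set_eqI iffI)
    fix r assume "r \<in> {dist u v | u v. u \<in> korbit a b z \<and> v \<in> korbit a b w}"
    then obtain u k m s where u: "u \<in> korbit a b z" and r: "r = dist u (kelem a b k m s w)"
      unfolding mem_korbit_iff by blast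
    obtain k' m' s' where inv: "\<And>z. kelem a b k' m' s' (kelem a b k m s z) = z"
      using kelem_inverse[of a b k m s] by blast
    have "r = dist (kelem a b k' m' s' u) w" unfolding r by (metis dist_kelem inv)
    moreover have "kelem a b k' m' s' u \<in> korbit a b z"
      using u by (metis korbit_eq_iff korbit_kelem)
    ultimately show "r \<in> {dist u w | u. u \<in> korbit a b z}" by blast
  qed (use self_in_korbit in blast)
  then show ?thesis unfolding kdist_def by simp
qed

lemma kdist_le_dist:
  assumes "u \<in> korbit a b z"
  shows "kdist (korbit a b z) (korbit a b w) \<le> dist u w"
proof -
  have "bdd_below {dist u w | u. u \<in> korbit a b z}" by (rule bdd_belowI[where m = 0]) auto
  then show ?thesis unfolding kdist_korbit by (rule cInf_lower[rotated]) (use assms in blast)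
qed

lemma kdist_greatest:
  "(\<And>u. u \<in> korbit a b z \<Longrightarrow> M \<le> dist u w) \<Longrightarrow> M \<le> kdist (korbit a b z) (korbit a b w)"
  unfolding kdist_korbit by (rule cInf_greatest) (use self_in_korbit in blast)+

lemma abs_of_int_mult_ge:
  fixes c :: real
  assumes "k \<noteq> 0" "0 \<le> c"
  shows "c \<le> \<bar>of_int k * c\<bar>"
proof -
  have "(1::real) \<le> of_int \<bar>k\<bar>" using assms(1) by linarith
  then have "c \<le> of_int \<bar>k\<bar> * c" using mult_right_mono[OF _ assms(2)] by fastforce
  then show ?thesis using assms(2) by (simp add: abs_mult)
qed

lemma of_int_mult_not_between:
  fixes c :: real
  assumes "0 < c"
  shows "of_int j * c \<notin> {0<..<c}"
proof (cases "j \<le> 0")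
  case True
  then have "of_int j * c \<le> 0" using assms by (simp add: mult_nonpos_nonneg)
  then show ?thesis by simp
next
  case False
  then have "1 * c \<le> of_int j * c" using assms by (intro mult_right_mono) auto
  then show ?thesis by simp
qed

lemma kelem_fixes_if_dist_less:
  assumes "0 < a" "0 < b" and close: "dist p (kelem a b k m s p) < min a b"
  shows "kelem a b k m s p = p"
proof (rule ccontr)
  obtain x y where p: "p = (x, y)" by (cases p)
  have dx: "\<bar>fst (kelem a b k m s p) - x\<bar> < min a b"
    and dy: "\<bar>snd (kelem a b k m s p) - y\<bar> < min a b"
    using close dist_fst_le[of p "kelem a b k m s p"] dist_snd_le[of p "kelem a b k m s p"]
    by (simp_all add: p dist_real_def abs_minus_commute)
  assume moved: "kelem a b k m s p \<noteq> p"
  show False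
  proof (cases s)
    case True
    have "2 * k + 1 \<noteq> 0" by presburger
    then have "a \<le> \<bar>of_int (2 * k + 1) * a\<bar>" using assms(1) by (intro abs_of_int_mult_ge) auto
    then show False using dx True by (simp add: p)
  next
    case False
    show False
    proof (cases "k = 0")
      case True
      with moved False have "m \<noteq> 0" by (auto simp: p)
      then have "b \<le> \<bar>of_int m * b\<bar>" using assms(2) by (intro abs_of_int_mult_ge) auto
      then show False using dy False by (simp add: p)
    next
      case k: False
      have "a \<le> \<bar>of_int (2 * k) * a\<bar>" using assms(1) k by (intro abs_of_int_mult_ge) auto
      then show False using dx False by (simp add: p)
    qed
  qed
qed

definition kproj_segment ::
  "real \<Rightarrow> real \<Rightarrow> real \<times> real \<Rightarrow> real \<times> real \<Rightarrow> real \<Rightarrow> (real \<times> real) set" where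
  "kproj_segment a b u v = (\<lambda>t\<in>{0..1}. korbit a b (u + t *\<^sub>R (v - u)))"

lemma ksegments_eq_image:
  assumes P: "P \<in> klein a b" and Q: "Q \<in> klein a b" and c: "c \<in> Q"
  shows "ksegments a b P Q = (\<lambda>u. kproj_segment a b u c) ` {u \<in> P. dist u c = kdist P Q}"
proof (intro set_eqI iffI)
  fix \<gamma> assume "\<gamma> \<in> ksegments a b P Q"
  then obtain u v where \<gamma>: "\<gamma> = kproj_segment a b u v" and u: "u \<in> P" and v: "v \<in> Q"
    and uv: "dist u v = kdist P Q"
    unfolding ksegments_def kproj_segment_def by blast
  obtain k m s where vc: "v = kelem a b k m s c"
    using v klein_eq_korbit[OF Q c] mem_korbit_iff by blast
  obtain k' m' s' where inv: "\<And>z. kelem a b k' m' s' (kelem a b k m s z) = z"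
    using kelem_inverse[of a b k m s] by blast
  define h where "h = kelem a b k' m' s'"
  have hv: "h v = c" unfolding vc h_def inv ..
  have "h u \<in> P"
    using u klein_eq_korbit[OF P u] unfolding h_def by (metis korbit_eq_iff korbit_kelem)
  moreover have "dist (h u) c = kdist P Q" using uv hv unfolding h_def by (metis dist_kelem)
  moreover have "kproj_segment a b u v = kproj_segment a b (h u) c"
    unfolding kproj_segment_def
  proof (rule restrict_ext)
    fix t :: real
    have "korbit a b (u + t *\<^sub>R (v - u)) = korbit a b (h (u + t *\<^sub>R (v - u)))"
      unfolding h_def by simp
    also have "\<dots> = korbit a b (h u + t *\<^sub>R (c - h u))"
      unfolding h_def kelem_affine hv[unfolded h_def] ..
    finally show "korbit a b (u + t *\<^sub>R (v - u)) = korbit a b (h u + t *\<^sub>R (c - h u))" .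
  qed
  ultimately show "\<gamma> \<in> (\<lambda>u. kproj_segment a b u c) ` {u \<in> P. dist u c = kdist P Q}"
    using \<gamma> by blast
next
  fix \<gamma> assume "\<gamma> \<in> (\<lambda>u. kproj_segment a b u c) ` {u \<in> P. dist u c = kdist P Q}"
  then show "\<gamma> \<in> ksegments a b P Q"
    unfolding ksegments_def kproj_segment_def using c by blast
qed

text \<open>Two segments ending at c with equal projections pass, near c, through points of one
  orbit that are closer than min a b; hence these points coincide and so do the segments.\<close>
lemma inj_on_kproj_segment:
  assumes ab: "0 < a" "0 < b"
  shows "inj_on (\<lambda>u. kproj_segment a b u c) {u. dist u c = d}"
proof (rule inj_onI)
  fix u u' assume u: "u \<in> {u. dist u c = d}" and u': "u' \<in> {u. dist u c = d}"
    and same: "kproj_segment a b u c = kproj_segment a b u' c"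
  have d: "0 \<le> d" using u by auto
  define s where "s = min 1 (min a b / (4 * d + 4))"
  have s: "0 < s" "s \<le> 1" using ab d by (simp_all add: s_def)
  have "s \<le> min a b / (4 * d + 4)" by (simp add: s_def)
  then have "s * (4 * d + 4) \<le> min a b" using d by (simp add: pos_le_divide_eq)
  moreover have "s * (2 * d) = 2 * (s * d)" "s * (4 * d + 4) = 4 * (s * d) + 4 * s" "0 \<le> s * d"
    using s d by (simp_all add: algebra_simps)
  ultimately have small: "s * (2 * d) < min a b" using s by linarith
  define p p' where "p = u + (1 - s) *\<^sub>R (c - u)" and "p' = u' + (1 - s) *\<^sub>R (c - u')"
  have "korbit a b p' = korbit a b p"
    using fun_cong[OF same, of "1 - s"] s by (simp add: kproj_segment_def p_def p'_def)
  then obtain k m s' where p': "p' = kelem a b k m s' p"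
    using korbit_eq_iff mem_korbit_iff by metis
  have diff: "p - p' = s *\<^sub>R (u - u')" by (simp add: p_def p'_def algebra_simps)
  have "dist p p' = s * dist u u'" using s by (simp add: dist_norm diff)
  also have "\<dots> \<le> s * (2 * d)"
    using s dist_triangle2[of u u' c] u u' by (intro mult_left_mono) auto
  finally have "p' = p" using small p' kelem_fixes_if_dist_less[OF ab, of p] by simp
  then show "u = u'" using diff s by simp
qed

lemma card_ksegments:
  assumes "0 < a" "0 < b" "P \<in> klein a b" "Q \<in> klein a b" "c \<in> Q"
  shows "card (ksegments a b P Q) = card {u \<in> P. dist u c = kdist P Q}"
  unfolding ksegments_eq_image[OF assms(3-5)]
  by (rule card_image, rule inj_on_subset[OF inj_on_kproj_segment[OF assms(1,2)]]) auto

section \<open>Symmetries of K_{a,b}\<close>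

definition ksymmetry ::
  "real \<Rightarrow> real \<Rightarrow> (real \<times> real \<Rightarrow> real \<times> real) \<Rightarrow> (real \<times> real \<Rightarrow> real \<times> real) \<Rightarrow> bool" where
  "ksymmetry a b \<phi> \<psi> \<longleftrightarrow> (\<forall>x. \<psi> (\<phi> x) = x) \<and> (\<forall>x. \<phi> (\<psi> x) = x)
     \<and> (\<forall>u v. dist (\<phi> u) (\<phi> v) = dist u v) \<and> (\<forall>w. \<phi> ` korbit a b w = korbit a b (\<phi> w))
     \<and> (`) \<phi> ` kmain a b = kmain a b"

lemma ksymmetryI:
  assumes inverse: "\<And>x. \<psi> (\<phi> x) = x" "\<And>x. \<phi> (\<psi> x) = x"
    and isometry: "\<And>u v. dist (\<phi> u) (\<phi> v) = dist u v"
    and conj: "\<And>k m s. \<exists>k' m' s'. \<forall>z. \<phi> (kelem a b k m s z) = kelem a b k' m' s' (\<phi> z)"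
    and conj_inv: "\<And>k m s. \<exists>k' m' s'. \<forall>z. \<psi> (kelem a b k m s z) = kelem a b k' m' s' (\<psi> z)"
    and main: "\<And>x n. \<exists>x' n'. \<phi> (x, of_int n * b / 2) = (x', of_int n' * b / 2)"
    and main_inv: "\<And>x n. \<exists>x' n'. \<psi> (x, of_int n * b / 2) = (x', of_int n' * b / 2)"
  shows "ksymmetry a b \<phi> \<psi>"
proof -
  have sub: "f ` korbit a b w \<subseteq> korbit a b (f w)"
    if "\<And>k m s. \<exists>k' m' s'. \<forall>z. f (kelem a b k m s z) = kelem a b k' m' s' (f z)" for f w
  proof
    fix p assume "p \<in> f ` korbit a b w"
    then obtain k m s where "p = f (kelem a b k m s w)" by (auto simp: mem_korbit_iff)
    then show "p \<in> korbit a b (f w)" using that by (metis kelem_in_korbit)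
  qed
  have orbit: "\<phi> ` korbit a b w = korbit a b (\<phi> w)" for w
  proof
    show "\<phi> ` korbit a b w \<subseteq> korbit a b (\<phi> w)" using sub[OF conj] .
    have "\<psi> ` korbit a b (\<phi> w) \<subseteq> korbit a b w"
      using sub[OF conj_inv, of "\<phi> w"] by (simp add: inverse(1))
    then have "\<phi> ` \<psi> ` korbit a b (\<phi> w) \<subseteq> \<phi> ` korbit a b w" by (rule image_mono)
    then show "korbit a b (\<phi> w) \<subseteq> \<phi> ` korbit a b w" by (simp add: image_image inverse(2))
  qed
  have into_main: "\<phi> ` Q \<in> kmain a b" if main_Q: "Q \<in> kmain a b" for Q
  proof -
    obtain x n where Q: "Q = korbit a b (x, of_int n * b / 2)"
      using main_Q unfolding kmain_def by blast
    obtain x' n' where \<phi>: "\<phi> (x, of_int n * b / 2) = (x', of_int n' * b / 2)" using main by blast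
    have "\<phi> ` Q = korbit a b (x', of_int n' * b / 2)" unfolding Q orbit \<phi> ..
    then show ?thesis unfolding kmain_def by blast
  qed
  have onto_main: "Q \<in> (`) \<phi> ` kmain a b" if main_Q: "Q \<in> kmain a b" for Q
  proof -
    obtain x n where Q: "Q = korbit a b (x, of_int n * b / 2)"
      using main_Q unfolding kmain_def by blast
    obtain x' n' where \<psi>: "\<psi> (x, of_int n * b / 2) = (x', of_int n' * b / 2)"
      using main_inv by blast
    have "Q = \<phi> ` korbit a b (x', of_int n' * b / 2)" unfolding Q orbit \<psi>[symmetric] inverse(2) ..
    then show ?thesis unfolding kmain_def by blast
  qed
  have "(`) \<phi> ` kmain a b = kmain a b"
    by (rule equalityI[OF image_subsetI[OF into_main] subsetI[OF onto_main]])
  then show ?thesis unfolding ksymmetry_def using inverse isometry orbit by simp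
qed

lemma ksymmetryD:
  assumes "ksymmetry a b \<phi> \<psi>"
  shows "\<psi> (\<phi> x) = x" "\<phi> (\<psi> x) = x" "dist (\<phi> u) (\<phi> v) = dist u v"
    and ksymmetry_image_korbit: "\<phi> ` korbit a b w = korbit a b (\<phi> w)"
    and "(`) \<phi> ` kmain a b = kmain a b"
  using assms unfolding ksymmetry_def by (simp_all del: split_paired_All)

lemma ksymmetry_involutionI:
  assumes "\<And>x. \<phi> (\<phi> x) = x" "\<And>u v. dist (\<phi> u) (\<phi> v) = dist u v"
    and "\<And>k m s. \<exists>k' m' s'. \<forall>z. \<phi> (kelem a b k m s z) = kelem a b k' m' s' (\<phi> z)"
    and "\<And>x n. \<exists>x' n'. \<phi> (x, of_int n * b / 2) = (x', of_int n' * b / 2)"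
  shows "ksymmetry a b \<phi> \<phi>"
  by (rule ksymmetryI[OF assms(1,1,2,3,3,4,4)])

lemma ksymmetry_comp:
  assumes "ksymmetry a b \<phi> \<psi>" "ksymmetry a b \<phi>' \<psi>'"
  shows "ksymmetry a b (\<phi>' \<circ> \<phi>) (\<psi> \<circ> \<psi>')"
  unfolding ksymmetry_def
proof (intro conjI allI)
  note S = ksymmetryD[OF assms(1)] ksymmetryD[OF assms(2)]
  show "(\<psi> \<circ> \<psi>') ((\<phi>' \<circ> \<phi>) x) = x" "(\<phi>' \<circ> \<phi>) ((\<psi> \<circ> \<psi>') x) = x"
    "dist ((\<phi>' \<circ> \<phi>) u) ((\<phi>' \<circ> \<phi>) v) = dist u v" for x u v
    using S by simp_all
  show "(\<phi>' \<circ> \<phi>) ` korbit a b w = korbit a b ((\<phi>' \<circ> \<phi>) w)" for w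
    by (simp only: image_comp[symmetric] comp_apply S(4,9))
  have "(`) (\<phi>' \<circ> \<phi>) ` kmain a b = (`) \<phi>' ` (`) \<phi> ` kmain a b"
    by (simp add: image_comp)
  then show "(`) (\<phi>' \<circ> \<phi>) ` kmain a b = kmain a b" by (simp only: S(5,10))
qed

lemma ksymmetry_inj: "ksymmetry a b \<phi> \<psi> \<Longrightarrow> inj \<phi>"
  by (metis injI ksymmetryD(1))

lemma ksymmetry_image_klein:
  assumes "ksymmetry a b \<phi> \<psi>"
  shows "(`) \<phi> ` klein a b = klein a b"
proof -
  have surj: "range \<phi> = UNIV" using ksymmetryD(2)[OF assms] by (metis surjI)
  have "(`) \<phi> ` klein a b = range (\<lambda>w. korbit a b (\<phi> w))"
    unfolding klein_def by (simp add: image_image ksymmetry_image_korbit[OF assms])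
  also have "\<dots> = korbit a b ` range \<phi>" by (simp add: image_image)
  finally show ?thesis unfolding surj klein_def .
qed

lemma inj_image_image: "inj f \<Longrightarrow> inj_on ((`) f) X"
  by (rule inj_on_image) (auto intro: inj_on_subset)

lemma kdist_isometry_image:
  assumes "\<And>u v. dist (\<phi> u) (\<phi> v) = dist u v"
  shows "kdist (\<phi> ` P) (\<phi> ` Q) = kdist P Q"
proof -
  have "{dist u v | u v. u \<in> \<phi> ` P \<and> v \<in> \<phi> ` Q} = {dist (\<phi> u) (\<phi> v) | u v. u \<in> P \<and> v \<in> Q}"
    by blast
  also have "\<dots> = {dist u v | u v. u \<in> P \<and> v \<in> Q}" by (simp only: assms)
  finally have "{dist u v | u v. u \<in> \<phi> ` P \<and> v \<in> \<phi> ` Q} = {dist u v | u v. u \<in> P \<and> v \<in> Q}" .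
  then show ?thesis unfolding kdist_def by simp
qed

lemma ksymmetry_kdist: "ksymmetry a b \<phi> \<psi> \<Longrightarrow> kdist (\<phi> ` P) (\<phi> ` Q) = kdist P Q"
  by (rule kdist_isometry_image) (rule ksymmetryD(3))

lemma ksymmetry_kfar:
  assumes \<phi>: "ksymmetry a b \<phi> \<psi>"
  shows "kfar a b (\<phi> ` P) = (`) \<phi> ` kfar a b P"
proof -
  have "kfar a b (\<phi> ` P)
      = {Q \<in> (`) \<phi> ` klein a b. \<forall>Q' \<in> (`) \<phi> ` klein a b. kdist (\<phi> ` P) Q' \<le> kdist (\<phi> ` P) Q}"
    unfolding kfar_def ksymmetry_image_klein[OF \<phi>] ..
  also have "\<dots> = (`) \<phi> `
      {Q \<in> klein a b. \<forall>Q' \<in> klein a b. kdist (\<phi> ` P) (\<phi> ` Q') \<le> kdist (\<phi> ` P) (\<phi> ` Q)}"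
    by blast
  also have "\<dots> = (`) \<phi> ` kfar a b P"
    unfolding kfar_def by (simp only: ksymmetry_kdist[OF \<phi>])
  finally show ?thesis .
qed

lemma ksymmetry_card_kfar: "ksymmetry a b \<phi> \<psi> \<Longrightarrow> card (kfar a b (\<phi> ` P)) = card (kfar a b P)"
  by (simp add: ksymmetry_kfar card_image inj_image_image ksymmetry_inj)

lemma ksymmetry_card_ksegments:
  assumes ab: "0 < a" "0 < b" and \<phi>: "ksymmetry a b \<phi> \<psi>"
    and P: "P \<in> klein a b" and Q: "Q \<in> klein a b"
  shows "card (ksegments a b (\<phi> ` P) (\<phi> ` Q)) = card (ksegments a b P Q)"
proof -
  obtain c where c: "c \<in> Q" using Q self_in_korbit unfolding klein_def by blast
  have klein: "\<phi> ` P \<in> klein a b" "\<phi> ` Q \<in> klein a b"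
    using P Q ksymmetry_image_klein[OF \<phi>] by blast+
  note dist = ksymmetryD(3)[OF \<phi>]
  have "card (ksegments a b (\<phi> ` P) (\<phi> ` Q)) = card {u \<in> \<phi> ` P. dist u (\<phi> c) = kdist P Q}"
    using card_ksegments[OF ab klein imageI[OF c]] by (simp add: ksymmetry_kdist[OF \<phi>])
  also have "{u \<in> \<phi> ` P. dist u (\<phi> c) = kdist P Q} = \<phi> ` {u \<in> P. dist (\<phi> u) (\<phi> c) = kdist P Q}"
    by blast
  also have "\<dots> = \<phi> ` {u \<in> P. dist u c = kdist P Q}" by (simp only: dist)
  also have "card \<dots> = card {u \<in> P. dist u c = kdist P Q}"
    using ksymmetry_inj[OF \<phi>] by (simp add: card_image inj_on_subset)
  finally show ?thesis using card_ksegments[OF ab P Q c] by simp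
qed

lemma ksymmetry_card_kfarn:
  assumes ab: "0 < a" "0 < b" and \<phi>: "ksymmetry a b \<phi> \<psi>" and P: "P \<in> klein a b"
  shows "card (kfarn a b n (\<phi> ` P)) = card (kfarn a b n P)"
proof -
  have "kfarn a b n (\<phi> ` P) = (`) \<phi> ` kfarn a b n P"
    unfolding kfarn_def ksymmetry_kfar[OF \<phi>]
    using ksymmetry_card_ksegments[OF ab \<phi> P] unfolding kfar_def by auto
  then show ?thesis by (simp add: card_image inj_image_image ksymmetry_inj[OF \<phi>])
qed

lemma ksymmetry_kdist_main:
  assumes \<phi>: "ksymmetry a b \<phi> \<psi>"
  shows "kdist_main a b (\<phi> ` P) = kdist_main a b P"
proof -
  have "{kdist (\<phi> ` P) Q | Q. Q \<in> kmain a b} = {kdist (\<phi> ` P) Q | Q. Q \<in> (`) \<phi> ` kmain a b}"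
    by (simp only: ksymmetryD(5)[OF \<phi>])
  also have "\<dots> = {kdist (\<phi> ` P) (\<phi> ` Q) | Q. Q \<in> kmain a b}" by blast
  also have "\<dots> = {kdist P Q | Q. Q \<in> kmain a b}"
    by (simp only: ksymmetry_kdist[OF \<phi>])
  finally show ?thesis unfolding kdist_main_def by simp
qed

definition hshift :: "real \<Rightarrow> real \<times> real \<Rightarrow> real \<times> real" where
  "hshift t = (\<lambda>(x, y). (x + t, y))"

definition vreflect :: "real \<Rightarrow> real \<times> real \<Rightarrow> real \<times> real" where
  "vreflect b = (\<lambda>(x, y). (x, b / 2 - y))"

definition halfturn :: "real \<Rightarrow> real \<Rightarrow> real \<times> real \<Rightarrow> real \<times> real" where
  "halfturn a b = (\<lambda>(x, y). (a - x, b - y))"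

lemma hshift_Pair [simp]: "hshift t (x, y) = (x + t, y)"
  by (simp add: hshift_def)

lemma vreflect_Pair [simp]: "vreflect b (x, y) = (x, b / 2 - y)"
  by (simp add: vreflect_def)

lemma halfturn_Pair [simp]: "halfturn a b (x, y) = (a - x, b - y)"
  by (simp add: halfturn_def)

lemma ksymmetry_hshift: "ksymmetry a b (hshift t) (hshift (- t))"
proof (rule ksymmetryI)
  show "\<exists>k' m' s'. \<forall>z. hshift \<tau> (kelem a b k m s z) = kelem a b k' m' s' (hshift \<tau> z)" for \<tau> k m s
    by (rule exI[of _ k], rule exI[of _ m], rule exI[of _ s]) (auto simp: algebra_simps)
qed (auto simp: dist_Pair_Pair)

lemma ksymmetry_vreflect: "ksymmetry a b (vreflect b) (vreflect b)"
proof (rule ksymmetry_involutionI)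
  show "\<exists>k' m' s'. \<forall>z. vreflect b (kelem a b k m s z) = kelem a b k' m' s' (vreflect b z)" for k m s
    by (rule exI[of _ k], rule exI[of _ "if s then 1 - m else - m"], rule exI[of _ s])
      (auto simp: algebra_simps)
  show "\<exists>x' n'. vreflect b (x, of_int n * b / 2) = (x', of_int n' * b / 2)" for x n
    by (rule exI[of _ x], rule exI[of _ "1 - n"]) (simp add: algebra_simps)
qed (auto simp: dist_Pair_Pair dist_real_def abs_minus_commute)

lemma ksymmetry_halfturn: "ksymmetry a b (halfturn a b) (halfturn a b)"
proof (rule ksymmetry_involutionI)
  show "\<exists>k' m' s'. \<forall>z. halfturn a b (kelem a b k m s z) = kelem a b k' m' s' (halfturn a b z)"
    for k m s
    by (rule exI[of _ "if s then - k - 1 else - k"], rule exI[of _ "if s then 2 - m else - m"],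
        rule exI[of _ s]) (auto simp: algebra_simps)
  show "\<exists>x' n'. halfturn a b (x, of_int n * b / 2) = (x', of_int n' * b / 2)" for x n
    by (rule exI[of _ "a - x"], rule exI[of _ "2 - n"]) (simp add: algebra_simps)
qed (auto simp: dist_Pair_Pair dist_real_def abs_minus_commute)

lemma korbit_meets_rectangle:
  assumes a: "0 < a" and b: "0 < b"
  shows "\<exists>x y. (x, y) \<in> korbit a b w \<and> 0 \<le> x \<and> x \<le> a \<and> c \<le> y \<and> y \<le> c + b"
proof -
  obtain x y where w: "w = (x, y)" by (cases w)
  define j where "j = \<lfloor>x / a\<rfloor>"
  have j: "of_int j * a \<le> x" "x < (of_int j + 1) * a"
    using floor_divide_lower[OF a, of x] floor_divide_upper[OF a, of x] by (simp_all add: j_def)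
  obtain y' where w': "(x - of_int j * a, y') \<in> korbit a b w"
  proof (cases "even j")
    case True
    then obtain k where "j = 2 * k" by (auto elim: evenE)
    then show ?thesis using that kelem_in_korbit[of a b "- k" 0 False w] by (simp add: w)
  next
    case False
    then obtain k where "j = 2 * k + 1" by (auto elim: oddE)
    then show ?thesis
      using that kelem_in_korbit[of a b "- k - 1" 0 True w] by (simp add: w algebra_simps)
  qed
  define n where "n = \<lfloor>(y' - c) / b\<rfloor>"
  have n: "of_int n * b \<le> y' - c" "y' - c < (of_int n + 1) * b"
    using floor_divide_lower[OF b, of "y' - c"] floor_divide_upper[OF b, of "y' - c"]
    by (simp_all add: n_def)
  have "korbit a b (x - of_int j * a, y') = korbit a b w" using w' korbit_eq_iff by blast
  then have "(x - of_int j * a, y' - of_int n * b) \<in> korbit a b w"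
    using kelem_in_korbit[of a b 0 "- n" False "(x - of_int j * a, y')"] by simp
  then show ?thesis using j n by (intro exI conjI) (auto simp: algebra_simps)
qed

lemma klein_normal_form:
  assumes a: "0 < a" and b: "0 < b" and P: "P \<in> klein a b"
  obtains \<phi> \<psi> y0 where "ksymmetry a b \<phi> \<psi>" "0 \<le> y0" "y0 \<le> b / 4" "\<phi> ` P = korbit a b (0, y0)"
proof -
  obtain w where "P = korbit a b w" using P unfolding klein_def by blast
  then obtain x y where xy: "(x, y) \<in> P" "- b / 2 \<le> y" "y \<le> b / 2"
    using korbit_meets_rectangle[OF a b, of w "- b / 2"] by auto
  obtain x' t where "(x', t) \<in> P" and t: "0 \<le> t" "t \<le> b / 2"
  proof (cases "0 \<le> y")
    case False
    have "(x + a, - y) \<in> P"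
      using kelem_in_korbit[of a b 0 0 True "(x, y)"] xy(1) klein_eq_korbit[OF P xy(1)] by simp
    then show ?thesis using that False xy by auto
  qed (use that xy in auto)
  then have Pt: "P = korbit a b (x', t)" using klein_eq_korbit[OF P] by blast
  have shift: "hshift (- x') ` P = korbit a b (0, t)"
    unfolding Pt ksymmetry_image_korbit[OF ksymmetry_hshift] by simp
  show ?thesis
  proof (cases "t \<le> b / 4")
    case True
    then show ?thesis using that[OF ksymmetry_hshift _ _ shift] t by simp
  next
    case False
    have "(vreflect b \<circ> hshift (- x')) ` P = korbit a b (0, b / 2 - t)"
      unfolding image_comp[symmetric] shift ksymmetry_image_korbit[OF ksymmetry_vreflect] by simp
    then show ?thesis
      using that[OF ksymmetry_comp[OF ksymmetry_hshift[of a b "- x'"] ksymmetry_vreflect],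
          of "b / 2 - t"] False t
      by simp
  qed
qed

section \<open>Triangles of lifts and their circumcircles\<close>

lemma dist_eq_sqrt: "dist u v = sqrt ((fst u - fst v)\<^sup>2 + (snd u - snd v)\<^sup>2)"
  by (cases u; cases v) (simp add: dist_Pair_Pair dist_real_def)

lemma dist_eq_of_sq: "0 \<le> r \<Longrightarrow> (fst u - fst v)\<^sup>2 + (snd u - snd v)\<^sup>2 = r\<^sup>2 \<Longrightarrow> dist u v = r"
  by (simp add: dist_eq_sqrt)

lemma convex_hull_concyclic_near_point:
  fixes x c :: "'a::real_inner"
  assumes S: "finite S" and x: "x \<in> convex hull S" and R: "\<And>p. p \<in> S \<Longrightarrow> dist p c = R"
  shows "\<exists>p\<in>S. (dist x p)\<^sup>2 + (dist x c)\<^sup>2 \<le> R\<^sup>2"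
proof (rule ccontr)
  assume "\<not> ?thesis"
  then have pos: "0 < (dist x p)\<^sup>2 + (dist x c)\<^sup>2 - R\<^sup>2" if "p \<in> S" for p
    using that by force
  obtain u where u: "\<forall>p\<in>S. 0 \<le> u p" "sum u S = 1" "(\<Sum>p\<in>S. u p *\<^sub>R p) = x"
    using x unfolding convex_hull_finite[OF S] by blast
  have excess: "(dist x p)\<^sup>2 + (dist x c)\<^sup>2 - R\<^sup>2 = 2 * inner (x - c) (x - p)" if "p \<in> S" for p
  proof -
    have "R\<^sup>2 = inner (p - c) (p - c)" using R[OF that] by (metis dist_norm power2_norm_eq_inner)
    moreover have "x - p = (x - c) - (p - c)" by simp
    ultimately show ?thesis
      by (simp add: dist_norm power2_norm_eq_inner inner_diff_left inner_diff_right inner_commute)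
  qed
  have "(\<Sum>p\<in>S. u p * ((dist x p)\<^sup>2 + (dist x c)\<^sup>2 - R\<^sup>2)) = 2 * inner (x - c) (\<Sum>p\<in>S. u p *\<^sub>R (x - p))"
    by (simp add: excess inner_sum_right sum_distrib_left algebra_simps)
  also have "(\<Sum>p\<in>S. u p *\<^sub>R (x - p)) = 0"
    using u by (simp add: scaleR_diff_right sum_subtractf flip: scaleR_left.sum)
  finally have zero: "(\<Sum>p\<in>S. u p * ((dist x p)\<^sup>2 + (dist x c)\<^sup>2 - R\<^sup>2)) = 0" by simp
  obtain q where q: "q \<in> S" "u q > 0"
    using u(1,2) by (metis less_eq_real_def sum.neutral zero_neq_one)
  have "0 < (\<Sum>p\<in>S. u p * ((dist x p)\<^sup>2 + (dist x c)\<^sup>2 - R\<^sup>2))"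
  proof (rule sum_pos2[OF S q(1)])
    show "0 < u q * ((dist x q)\<^sup>2 + (dist x c)\<^sup>2 - R\<^sup>2)" using q pos by simp
    show "0 \<le> u p * ((dist x p)\<^sup>2 + (dist x c)\<^sup>2 - R\<^sup>2)" if "p \<in> S" for p
      using that u(1) pos[OF that] by simp
  qed
  with zero show False by simp
qed

definition orient :: "real \<times> real \<Rightarrow> real \<times> real \<Rightarrow> real \<times> real \<Rightarrow> real" where
  "orient u v w = (fst v - fst u) * (snd w - snd u) - (snd v - snd u) * (fst w - fst u)"

lemma orient_sum: "orient x v w + orient u x w + orient u v x = orient u v w"
  by (simp add: orient_def algebra_simps)

lemma orient_combination:
  "orient u v w *\<^sub>R x = orient x v w *\<^sub>R u + orient u x w *\<^sub>R v + orient u v x *\<^sub>R w"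
  by (simp add: orient_def prod_eq_iff algebra_simps)

lemma in_convex_hull_triangle_if_orient:
  assumes "0 \<le> orient x v w" "0 \<le> orient u x w" "0 \<le> orient u v x" "0 < orient u v w"
  shows "x \<in> convex hull {u, v, w}"
proof -
  define r where "r = inverse (orient u v w)"
  define \<alpha> \<beta> \<gamma> where "\<alpha> = r * orient x v w" and "\<beta> = r * orient u x w" and "\<gamma> = r * orient u v x"
  have "x = r *\<^sub>R (orient u v w *\<^sub>R x)" using assms(4) by (simp add: r_def)
  also have "\<dots> = r *\<^sub>R (orient x v w *\<^sub>R u + orient u x w *\<^sub>R v + orient u v x *\<^sub>R w)"
    by (subst orient_combination) (rule refl)
  also have "\<dots> = \<alpha> *\<^sub>R u + \<beta> *\<^sub>R v + \<gamma> *\<^sub>R w"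
    by (simp add: \<alpha>_def \<beta>_def \<gamma>_def scaleR_add_right)
  finally have "x = \<alpha> *\<^sub>R u + \<beta> *\<^sub>R v + \<gamma> *\<^sub>R w" .
  moreover have "\<alpha> + \<beta> + \<gamma> = 1"
    using orient_sum[of x v w u] assms(4) by (simp add: r_def \<alpha>_def \<beta>_def \<gamma>_def flip: distrib_left)
  moreover have "0 \<le> \<alpha>" "0 \<le> \<beta>" "0 \<le> \<gamma>"
    using assms by (simp_all add: r_def \<alpha>_def \<beta>_def \<gamma>_def)
  ultimately show ?thesis unfolding convex_hull_3 by blast
qed

lemma orient_nonneg_by:
  "orient u v w = p * q + r * s \<Longrightarrow> 0 \<le> p \<Longrightarrow> 0 \<le> q \<Longrightarrow> 0 \<le> r \<Longrightarrow> 0 \<le> s \<Longrightarrow> 0 \<le> orient u v w"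
  by simp

lemma kdist_le_circumradius:
  assumes T: "finite T" "T \<subseteq> korbit a b z" and x: "x \<in> convex hull T"
    and r: "\<And>p. p \<in> T \<Longrightarrow> dist p c = r"
  shows "kdist (korbit a b z) (korbit a b x) \<le> r"
    and "r \<le> kdist (korbit a b z) (korbit a b x) \<Longrightarrow> x = c"
proof -
  obtain p where p: "p \<in> T" and near: "(dist x p)\<^sup>2 + (dist x c)\<^sup>2 \<le> r\<^sup>2"
    using convex_hull_concyclic_near_point[OF T(1) x r] by blast
  have r0: "0 \<le> r" using r[OF p] by (metis zero_le_dist)
  have "p \<in> korbit a b z" using T(2) p by blast
  then have kd: "kdist (korbit a b z) (korbit a b x) \<le> dist x p"
    using kdist_le_dist[of p a b z x] by (simp add: dist_commute)
  have "(dist x p)\<^sup>2 \<le> r\<^sup>2" using near zero_le_power2[of "dist x c"] by linarith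
  then have "dist x p \<le> r" using r0 by (rule power2_le_imp_le)
  with kd show "kdist (korbit a b z) (korbit a b x) \<le> r" by linarith
  assume "r \<le> kdist (korbit a b z) (korbit a b x)"
  then have "r\<^sup>2 \<le> (dist x p)\<^sup>2" using kd r0 by (intro power_mono) auto
  then have "(dist x c)\<^sup>2 \<le> 0" using near by linarith
  then show "x = c" by simp
qed

lemma kdist_bound_from_triangle:
  assumes hull: "x \<in> convex hull {p, q, v}"
    and lifts: "p \<in> korbit a b z" "q \<in> korbit a b z" "v \<in> korbit a b z"
    and circle: "dist p c = r" "dist q c = r" "dist v c = r"
    and "r \<le> R" and w: "w \<in> korbit a b x" and centre: "c \<in> korbit a b c'"
  shows "kdist (korbit a b z) (korbit a b x) \<le> R"
    and "R \<le> kdist (korbit a b z) (korbit a b x) \<Longrightarrow> r = R \<and> w \<in> korbit a b c'"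
proof -
  have T: "finite {p, q, v}" "{p, q, v} \<subseteq> korbit a b z" using lifts by auto
  have "\<And>u. u \<in> {p, q, v} \<Longrightarrow> dist u c = r" using circle by auto
  note bound = kdist_le_circumradius[OF T hull this]
  show "kdist (korbit a b z) (korbit a b x) \<le> R" using bound(1) \<open>r \<le> R\<close> by linarith
  assume "R \<le> kdist (korbit a b z) (korbit a b x)"
  then have "r = R" "x = c" using bound \<open>r \<le> R\<close> by auto
  then show "r = R \<and> w \<in> korbit a b c'" using w centre korbit_eq_iff by metis
qed

lemma kfar_korbit_eq:
  assumes bound: "\<And>w. kdist (korbit a b z) (korbit a b w) \<le> r"
    and attained: "\<And>c. c \<in> C \<Longrightarrow> kdist (korbit a b z) (korbit a b c) = r"
    and only: "\<And>w. r \<le> kdist (korbit a b z) (korbit a b w) \<Longrightarrow> \<exists>c\<in>C. w \<in> korbit a b c"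
    and "C \<noteq> {}"
  shows "kfar a b (korbit a b z) = korbit a b ` C"
proof -
  obtain c where c: "c \<in> C" using \<open>C \<noteq> {}\<close> by blast
  have "kfar a b (korbit a b z) = {Q \<in> klein a b. kdist (korbit a b z) Q = r}"
  proof (intro equalityI subsetI)
    fix Q assume "Q \<in> kfar a b (korbit a b z)"
    then have "Q \<in> klein a b" "kdist (korbit a b z) (korbit a b c) \<le> kdist (korbit a b z) Q"
      unfolding kfar_def by auto
    moreover obtain w where "Q = korbit a b w" using \<open>Q \<in> klein a b\<close> unfolding klein_def by blast
    ultimately show "Q \<in> {Q \<in> klein a b. kdist (korbit a b z) Q = r}"
      using attained[OF c] bound[of w] by simp
  next
    fix Q assume "Q \<in> {Q \<in> klein a b. kdist (korbit a b z) Q = r}"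
    then show "Q \<in> kfar a b (korbit a b z)" unfolding kfar_def klein_def using bound by auto
  qed
  also have "\<dots> = korbit a b ` C"
  proof (intro equalityI subsetI)
    fix Q assume "Q \<in> {Q \<in> klein a b. kdist (korbit a b z) Q = r}"
    then obtain w where Q: "Q = korbit a b w" and "kdist (korbit a b z) (korbit a b w) = r"
      unfolding klein_def by auto
    then obtain c where "c \<in> C" "w \<in> korbit a b c" using only by fastforce
    then show "Q \<in> korbit a b ` C" using Q korbit_eq_iff by blast
  qed (use attained in auto)
  finally show ?thesis .
qed

lemma kfarn_eq_kfar:
  "kfar a b P = F \<Longrightarrow> (\<And>Q. Q \<in> F \<Longrightarrow> card (ksegments a b P Q) = n) \<Longrightarrow> kfarn a b n P = F"
  unfolding kfarn_def by auto

section \<open>Points in normal position\<close>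

lemma sq_int_mult_diff_ge:
  fixes p r :: real and k :: int
  assumes p: "0 < p" and r: "0 \<le> r" "r \<le> p / 2"
  shows "r\<^sup>2 \<le> (of_int k * p - r)\<^sup>2"
    and "(of_int k * p - r)\<^sup>2 = r\<^sup>2 \<longleftrightarrow> k = 0 \<or> k = 1 \<and> r = p / 2"
proof -
  have excess: "(of_int k * p - r)\<^sup>2 - r\<^sup>2 = (of_int k * p) * (of_int k * p - 2 * r)"
    by (simp add: power2_eq_square algebra_simps)
  consider "k \<le> -1" | "k = 0" | "k = 1" | "2 \<le> k" by linarith
  then have "0 \<le> (of_int k * p) * (of_int k * p - 2 * r)
      \<and> ((of_int k * p) * (of_int k * p - 2 * r) = 0 \<longleftrightarrow> k = 0 \<or> k = 1 \<and> r = p / 2)"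
  proof cases
    case 1
    then have "of_int k * p \<le> -1 * p" using p by (intro mult_right_mono) auto
    then have "0 < (of_int k * p) * (of_int k * p - 2 * r)" using p r by (intro mult_neg_neg) auto
    then show ?thesis using 1 by auto
  next
    case 4
    then have "2 * p \<le> of_int k * p" using p by (intro mult_right_mono) auto
    then have "0 < of_int k * p" "0 < of_int k * p - 2 * r" using p r by linarith+
    then have "0 < (of_int k * p) * (of_int k * p - 2 * r)" by (rule mult_pos_pos)
    then show ?thesis using 4 by auto
  qed (use p r in auto)
  then show "r\<^sup>2 \<le> (of_int k * p - r)\<^sup>2" "(of_int k * p - r)\<^sup>2 = r\<^sup>2 \<longleftrightarrow> k = 0 \<or> k = 1 \<and> r = p / 2"
    using excess by auto
qed

lemma sum_sq_int_mult_diff_ge: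
  fixes p q r s :: real and k m :: int
  assumes "0 < p" "0 \<le> r" "r \<le> p / 2" and "0 < q" "0 \<le> s" "s \<le> q / 2"
  shows "r\<^sup>2 + s\<^sup>2 \<le> (of_int k * p - r)\<^sup>2 + (of_int m * q - s)\<^sup>2"
    and "(of_int k * p - r)\<^sup>2 + (of_int m * q - s)\<^sup>2 = r\<^sup>2 + s\<^sup>2 \<longleftrightarrow>
      (k = 0 \<or> k = 1 \<and> r = p / 2) \<and> (m = 0 \<or> m = 1 \<and> s = q / 2)"
proof -
  note X = sq_int_mult_diff_ge[OF assms(1-3), of k] and Y = sq_int_mult_diff_ge[OF assms(4-6), of m]
  show "r\<^sup>2 + s\<^sup>2 \<le> (of_int k * p - r)\<^sup>2 + (of_int m * q - s)\<^sup>2" using X(1) Y(1) by linarith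
  have "(of_int k * p - r)\<^sup>2 + (of_int m * q - s)\<^sup>2 = r\<^sup>2 + s\<^sup>2 \<longleftrightarrow>
      (of_int k * p - r)\<^sup>2 = r\<^sup>2 \<and> (of_int m * q - s)\<^sup>2 = s\<^sup>2"
    using X(1) Y(1) by auto
  then show "(of_int k * p - r)\<^sup>2 + (of_int m * q - s)\<^sup>2 = r\<^sup>2 + s\<^sup>2 \<longleftrightarrow>
      (k = 0 \<or> k = 1 \<and> r = p / 2) \<and> (m = 0 \<or> m = 1 \<and> s = q / 2)"
    unfolding X(2) Y(2) .
qed

lemma abs_add_int_mult_half_ge:
  fixes y b :: real and j :: int
  assumes "0 \<le> y" "y \<le> b / 4"
  shows "y \<le> \<bar>y + of_int j * (b / 2)\<bar>"
proof (cases "0 \<le> j")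
  case True
  then have "0 \<le> of_int j * (b / 2)" using assms by simp
  then show ?thesis using assms by linarith
next
  case False
  then have "of_int j * (b / 2) \<le> -1 * (b / 2)" using assms by (intro mult_right_mono) auto
  then show ?thesis using assms by linarith
qed

locale normal_point =
  fixes a b y0 :: real
  assumes a: "0 < a" and b: "0 < b" and y0: "0 \<le> y0" "y0 \<le> b / 4"
begin

abbreviation P0 :: "(real \<times> real) set" where
  "P0 \<equiv> korbit a b (0, y0)"

lemma P0_cases:
  assumes "u \<in> P0"
  obtains k m where "u = (2 * of_int k * a, y0 + of_int m * b)"
    | k m where "u = ((2 * of_int k + 1) * a, of_int m * b - y0)"
  using assms that by (auto simp: mem_korbit_iff split: if_splits)

lemma P0_lifts:
  "(0, y0) \<in> P0" "(a, - y0) \<in> P0" "(a, b - y0) \<in> P0" "(0, y0 + b) \<in> P0" "(a, 2 * b - y0) \<in> P0"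
  "(2 * a, y0) \<in> P0" "(- a, b - y0) \<in> P0" "(2 * a, y0 + b) \<in> P0"
  using kelem_in_korbit[of a b 0 0 False "(0, y0)"] kelem_in_korbit[of a b 0 0 True "(0, y0)"]
    kelem_in_korbit[of a b 0 1 True "(0, y0)"] kelem_in_korbit[of a b 0 1 False "(0, y0)"]
    kelem_in_korbit[of a b 0 2 True "(0, y0)"] kelem_in_korbit[of a b 1 0 False "(0, y0)"]
    kelem_in_korbit[of a b "-1" 1 True "(0, y0)"] kelem_in_korbit[of a b 1 1 False "(0, y0)"]
  by (simp_all add: algebra_simps)

lemma rectangle_representative:
  obtains x y where "(x, y) \<in> korbit a b w" "0 \<le> x" "x \<le> a" "y0 \<le> y" "y \<le> y0 + b"
  using korbit_meets_rectangle[OF a b, of w y0] by blast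

lemma kdist_main_P0: "kdist_main a b P0 = y0"
proof -
  have lower: "y0 \<le> kdist P0 Q" if main_Q: "Q \<in> kmain a b" for Q
  proof -
    obtain x n where Q: "Q = korbit a b (x, of_int n * b / 2)"
      using main_Q unfolding kmain_def by blast
    have "y0 \<le> dist u (x, of_int n * b / 2)" if u: "u \<in> P0" for u
    proof -
      have "y0 \<le> \<bar>snd u - of_int n * b / 2\<bar>"
      proof (cases rule: P0_cases[OF u])
        case (1 k m)
        then show ?thesis
          using abs_add_int_mult_half_ge[OF y0, of "2 * m - n"] by (simp add: algebra_simps)
      next
        case (2 k m)
        then show ?thesis using abs_add_int_mult_half_ge[OF y0, of "n - 2 * m"]
          by (simp add: algebra_simps abs_minus_commute)
      qed
      also have "\<dots> \<le> dist u (x, of_int n * b / 2)"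
        using dist_snd_le[of u "(x, of_int n * b / 2)"] by (simp add: dist_real_def)
      finally show ?thesis .
    qed
    then show ?thesis unfolding Q by (rule kdist_greatest)
  qed
  have "korbit a b (0, 0) \<in> kmain a b" unfolding kmain_def by (intro CollectI exI[of _ 0]) simp
  moreover have "kdist P0 (korbit a b (0, 0)) \<le> y0"
    using kdist_le_dist[OF self_in_korbit, of a b "(0, y0)" "(0, 0)"] y0
    by (simp add: dist_Pair_Pair)
  ultimately have "Inf {kdist P0 Q | Q. Q \<in> kmain a b} = y0"
    using lower by (intro cInf_eq_minimum) (force intro: antisym)+
  then show ?thesis unfolding kdist_main_def .
qed

section \<open>The case of an acute triangulation\<close>

text \<open>e is the inner product of the edges at (0, y0) of the triangle (0, y0), (a, -y0),
  (a, b - y0) of lifts; its sign decides which triangulation of the orbit is a Delaunay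
  triangulation, and hence which circumcentres are the farthest points.\<close>
definition e :: real where "e = a\<^sup>2 - 2 * y0 * (b - 2 * y0)"

lemma e_lambda: "e = a\<^sup>2 - b\<^sup>2 * (2 * y0 / b) * (1 - 2 * y0 / b)"
  using b by (simp add: e_def power2_eq_square field_simps)

definition x1 :: real where "x1 = e / (2 * a)"
definition r1 :: real where "r1 = sqrt (x1\<^sup>2 + (b / 2)\<^sup>2)"
definition c1 :: "real \<times> real" where "c1 = (a - x1, b / 2 - y0)"
definition c2 :: "real \<times> real" where "c2 = (x1, y0 + b / 2)"

lemma x1_le: "x1 \<le> a / 2"
proof -
  have "e \<le> a\<^sup>2" using y0 by (simp add: e_def)
  then show ?thesis using a by (simp add: x1_def power2_eq_square divide_le_eq)
qed

lemma x1_nonneg: "0 \<le> e \<Longrightarrow> 0 \<le> x1"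
  using a by (simp add: x1_def)

lemma x1_eq_0_iff: "x1 = 0 \<longleftrightarrow> e = 0"
  using a by (simp add: x1_def)

lemma x1_if_y0_eq_0:
  assumes "y0 = 0"
  shows "x1 = a / 2"
  unfolding x1_def e_def using a assms by (simp add: power2_eq_square)

lemma c1_circle: "(a - x1)\<^sup>2 + (b / 2 - 2 * y0)\<^sup>2 = x1\<^sup>2 + (b / 2)\<^sup>2"
proof -
  have "2 * a * x1 = e" using a by (simp add: x1_def)
  then show ?thesis by (simp add: e_def power2_eq_square algebra_simps)
qed

lemma dist_eq_r1: "(fst u - fst v)\<^sup>2 + (snd u - snd v)\<^sup>2 = x1\<^sup>2 + (b / 2)\<^sup>2 \<Longrightarrow> dist u v = r1"
  by (simp add: dist_eq_sqrt r1_def)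

lemma rectangle_cover_acute:
  assumes x: "0 \<le> x" "x \<le> a" and y: "y0 \<le> y" "y \<le> y0 + b"
  shows "(x, y) \<in> convex hull {(0, y0), (a, - y0), (a, b - y0)}
    \<or> (x, y) \<in> convex hull {(0, y0), (a, b - y0), (0, y0 + b)}
    \<or> (x, y) \<in> convex hull {(0, y0 + b), (a, b - y0), (a, 2 * b - y0)}"
proof -
  \<comment> \<open>L1 and L2 vanish on the lines through (a, b - y0) and (0, y0), resp. (0, y0 + b).\<close>
  define L1 where "L1 = x * (b - 2 * y0) - a * (y - y0)"
  define L2 where "L2 = a * (y0 + b - y) - 2 * y0 * x"
  have ab: "0 < a * b" using a b by simp
  consider "0 \<le> L1" | "L1 \<le> 0" "0 \<le> L2" | "L2 \<le> 0" by linarith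
  then show ?thesis
  proof cases
    case 1
    have "(x, y) \<in> convex hull {(0, y0), (a, - y0), (a, b - y0)}"
    proof (rule in_convex_hull_triangle_if_orient)
      show "0 \<le> orient (x, y) (a, - y0) (a, b - y0)"
        by (rule orient_nonneg_by[of _ _ _ "a - x" b 0 0])
          (use x b in \<open>simp_all add: orient_def algebra_simps\<close>)
      show "0 \<le> orient (0, y0) (x, y) (a, b - y0)"
        using 1 by (simp add: orient_def L1_def algebra_simps)
      show "0 \<le> orient (0, y0) (a, - y0) (x, y)"
        by (rule orient_nonneg_by[of _ _ _ a "y - y0" x "2 * y0"])
          (use x y y0 a in \<open>simp_all add: orient_def algebra_simps\<close>)
      show "0 < orient (0, y0) (a, - y0) (a, b - y0)"
        using ab by (simp add: orient_def algebra_simps)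
    qed
    then show ?thesis by blast
  next
    case 2
    have "(x, y) \<in> convex hull {(0, y0), (a, b - y0), (0, y0 + b)}"
    proof (rule in_convex_hull_triangle_if_orient)
      show "0 \<le> orient (x, y) (a, b - y0) (0, y0 + b)"
        using 2 by (simp add: orient_def L2_def algebra_simps)
      show "0 \<le> orient (0, y0) (x, y) (0, y0 + b)"
        by (rule orient_nonneg_by[of _ _ _ x b 0 0])
          (use x b in \<open>simp_all add: orient_def algebra_simps\<close>)
      show "0 \<le> orient (0, y0) (a, b - y0) (x, y)"
        using 2 by (simp add: orient_def L1_def algebra_simps)
      show "0 < orient (0, y0) (a, b - y0) (0, y0 + b)"
        using ab by (simp add: orient_def algebra_simps)
    qed
    then show ?thesis by blast
  next
    case 3
    have "(x, y) \<in> convex hull {(0, y0 + b), (a, b - y0), (a, 2 * b - y0)}"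
    proof (rule in_convex_hull_triangle_if_orient)
      show "0 \<le> orient (x, y) (a, b - y0) (a, 2 * b - y0)"
        by (rule orient_nonneg_by[of _ _ _ "a - x" b 0 0])
          (use x b in \<open>simp_all add: orient_def algebra_simps\<close>)
      show "0 \<le> orient (0, y0 + b) (x, y) (a, 2 * b - y0)"
        by (rule orient_nonneg_by[of _ _ _ x "b - 2 * y0" a "y0 + b - y"])
          (use x y y0 a in \<open>simp_all add: orient_def algebra_simps\<close>)
      show "0 \<le> orient (0, y0 + b) (a, b - y0) (x, y)"
        using 3 by (simp add: orient_def L2_def algebra_simps)
      show "0 < orient (0, y0 + b) (a, b - y0) (a, 2 * b - y0)"
        using ab by (simp add: orient_def algebra_simps)
    qed
    then show ?thesis by blast
  qed
qed

lemma circumcircles_acute: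
  "dist (0, y0) c1 = r1" "dist (a, - y0) c1 = r1" "dist (a, b - y0) c1 = r1"
  "dist (0, y0) c2 = r1" "dist (a, b - y0) c2 = r1" "dist (0, y0 + b) c2 = r1"
  "dist (0, y0 + b) (a - x1, 3 * b / 2 - y0) = r1" "dist (a, b - y0) (a - x1, 3 * b / 2 - y0) = r1"
  "dist (a, 2 * b - y0) (a - x1, 3 * b / 2 - y0) = r1"
  using c1_circle by (auto simp: c1_def c2_def power2_eq_square algebra_simps intro!: dist_eq_r1)

lemma kdist_le_r1:
  shows "kdist P0 (korbit a b w) \<le> r1"
    and "r1 \<le> kdist P0 (korbit a b w) \<Longrightarrow> w \<in> korbit a b c1 \<or> w \<in> korbit a b c2"
proof -
  obtain x y where xy: "(x, y) \<in> korbit a b w" "0 \<le> x" "x \<le> a" "y0 \<le> y" "y \<le> y0 + b"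
    by (rule rectangle_representative)
  have w: "korbit a b w = korbit a b (x, y)" using xy(1) korbit_eq_iff by blast
  then have w_in: "w \<in> korbit a b (x, y)" using self_in_korbit by metis
  have c1': "(a - x1, 3 * b / 2 - y0) \<in> korbit a b c1"
    using kelem_in_korbit[of a b 0 1 False c1] by (simp add: c1_def algebra_simps)
  note bound = kdist_bound_from_triangle[OF _ _ _ _ _ _ _ order_refl w_in]
  from rectangle_cover_acute[OF xy(2-5)]
  have "kdist P0 (korbit a b (x, y)) \<le> r1
      \<and> (r1 \<le> kdist P0 (korbit a b (x, y)) \<longrightarrow> w \<in> korbit a b c1 \<or> w \<in> korbit a b c2)"
  proof (elim disjE)
    assume hull: "(x, y) \<in> convex hull {(0, y0), (a, - y0), (a, b - y0)}"
    show ?thesis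
      using bound[OF hull P0_lifts(1,2,3) circumcircles_acute(1-3) self_in_korbit] by blast
  next
    assume hull: "(x, y) \<in> convex hull {(0, y0), (a, b - y0), (0, y0 + b)}"
    show ?thesis
      using bound[OF hull P0_lifts(1,3,4) circumcircles_acute(4-6) self_in_korbit] by blast
  next
    assume hull: "(x, y) \<in> convex hull {(0, y0 + b), (a, b - y0), (a, 2 * b - y0)}"
    show ?thesis using bound[OF hull P0_lifts(4,3,5) circumcircles_acute(7-9) c1'] by blast
  qed
  then show "kdist P0 (korbit a b w) \<le> r1"
    and "r1 \<le> kdist P0 (korbit a b w) \<Longrightarrow> w \<in> korbit a b c1 \<or> w \<in> korbit a b c2"
    unfolding w by blast+
qed

lemma sqdist_c2_ge:
  assumes e: "0 \<le> e" and u: "u \<in> P0"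
  shows "x1\<^sup>2 + (b / 2)\<^sup>2 \<le> (fst u - x1)\<^sup>2 + (snd u - (y0 + b / 2))\<^sup>2"
    and "(fst u - x1)\<^sup>2 + (snd u - (y0 + b / 2))\<^sup>2 = x1\<^sup>2 + (b / 2)\<^sup>2 \<Longrightarrow>
      u \<in> {(0, y0), (0, y0 + b), (a, b - y0)} \<or> y0 = 0 \<and> u = (a, - y0) \<or> x1 = 0 \<and> u = (- a, b - y0)"
proof -
  have x1: "0 \<le> x1" "x1 \<le> a / 2" using x1_nonneg[OF e] x1_le by auto
  have "x1\<^sup>2 + (b / 2)\<^sup>2 \<le> (fst u - x1)\<^sup>2 + (snd u - (y0 + b / 2))\<^sup>2 \<and>
    ((fst u - x1)\<^sup>2 + (snd u - (y0 + b / 2))\<^sup>2 = x1\<^sup>2 + (b / 2)\<^sup>2 \<longrightarrow>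
      u \<in> {(0, y0), (0, y0 + b), (a, b - y0)}
      \<or> y0 = 0 \<and> u = (a, - y0) \<or> x1 = 0 \<and> u = (- a, b - y0))"
  proof (cases rule: P0_cases[OF u])
    case (1 k m)
    have "(fst u - x1)\<^sup>2 + (snd u - (y0 + b / 2))\<^sup>2
        = (of_int k * (2 * a) - x1)\<^sup>2 + (of_int m * b - b / 2)\<^sup>2"
      using 1 by (simp add: algebra_simps)
    with sum_sq_int_mult_diff_ge[of "2 * a" x1 b "b / 2" k m] show ?thesis
      using 1 a b x1 by auto
  next
    case (2 k m)
    have "(fst u - x1)\<^sup>2 + (snd u - (y0 + b / 2))\<^sup>2
        = (of_int (- k) * (2 * a) - (a - x1))\<^sup>2 + (of_int (1 - m) * b - (b / 2 - 2 * y0))\<^sup>2"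
      using 2 by (simp add: power2_eq_square algebra_simps)
    moreover have "\<not> (x1 = 0 \<and> y0 = 0)" using x1_if_y0_eq_0 a by auto
    ultimately show ?thesis
      using sum_sq_int_mult_diff_ge[of "2 * a" "a - x1" b "b / 2 - 2 * y0" "- k" "1 - m"]
        2 a b x1 y0
      unfolding c1_circle by auto
  qed
  then show "x1\<^sup>2 + (b / 2)\<^sup>2 \<le> (fst u - x1)\<^sup>2 + (snd u - (y0 + b / 2))\<^sup>2"
    and "(fst u - x1)\<^sup>2 + (snd u - (y0 + b / 2))\<^sup>2 = x1\<^sup>2 + (b / 2)\<^sup>2 \<Longrightarrow>
      u \<in> {(0, y0), (0, y0 + b), (a, b - y0)} \<or> y0 = 0 \<and> u = (a, - y0) \<or> x1 = 0 \<and> u = (- a, b - y0)"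
    by blast+
qed

lemma circumcircle_c2_degenerate:
  shows "y0 = 0 \<Longrightarrow> dist (a, - y0) c2 = r1" and "x1 = 0 \<Longrightarrow> dist (- a, b - y0) c2 = r1"
proof -
  assume y: "y0 = 0"
  show "dist (a, - y0) c2 = r1"
  proof (rule dist_eq_r1)
    show "(fst (a, - y0) - fst c2)\<^sup>2 + (snd (a, - y0) - snd c2)\<^sup>2 = x1\<^sup>2 + (b / 2)\<^sup>2"
      unfolding c2_def fst_conv snd_conv unfolding x1_if_y0_eq_0[OF y] unfolding y
      by (simp add: power2_eq_square)
  qed
next
  assume x: "x1 = 0"
  show "dist (- a, b - y0) c2 = r1"
  proof (rule dist_eq_r1)
    show "(fst (- a, b - y0) - fst c2)\<^sup>2 + (snd (- a, b - y0) - snd c2)\<^sup>2 = x1\<^sup>2 + (b / 2)\<^sup>2"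
      using c1_circle unfolding c2_def x by (simp add: power2_eq_square algebra_simps)
  qed
qed

lemma nearest_lifts_c2:
  assumes e: "0 \<le> e"
  shows "{u \<in> P0. dist u c2 = r1} = {(0, y0), (0, y0 + b), (a, b - y0)}
    \<union> (if y0 = 0 then {(a, - y0)} else {}) \<union> (if x1 = 0 then {(- a, b - y0)} else {})"
proof (intro equalityI subsetI)
  fix u assume "u \<in> {u \<in> P0. dist u c2 = r1}"
  then have "u \<in> P0" "(fst u - x1)\<^sup>2 + (snd u - (y0 + b / 2))\<^sup>2 = x1\<^sup>2 + (b / 2)\<^sup>2"
    by (auto simp: dist_eq_sqrt r1_def c2_def)
  from sqdist_c2_ge(2)[OF e this] show "u \<in> {(0, y0), (0, y0 + b), (a, b - y0)}
    \<union> (if y0 = 0 then {(a, - y0)} else {}) \<union> (if x1 = 0 then {(- a, b - y0)} else {})"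
    by auto
qed (use P0_lifts circumcircles_acute circumcircle_c2_degenerate in \<open>auto split: if_splits\<close>)

lemma dist_P0_c2_ge: "0 \<le> e \<Longrightarrow> u \<in> P0 \<Longrightarrow> r1 \<le> dist u c2"
  using sqdist_c2_ge(1) by (simp add: dist_eq_sqrt r1_def c2_def)

lemma kdist_P0_c2: "0 \<le> e \<Longrightarrow> kdist P0 (korbit a b c2) = r1"
  using kdist_le_r1(1) kdist_greatest[OF dist_P0_c2_ge] by (metis antisym)

lemma card_ksegments_c2:
  assumes e: "0 \<le> e"
  shows "card (ksegments a b P0 (korbit a b c2)) = (if y0 = 0 \<or> x1 = 0 then 4 else 3)"
proof -
  have "card (ksegments a b P0 (korbit a b c2)) = card {u \<in> P0. dist u c2 = r1}"
    using card_ksegments[OF a b korbit_in_klein korbit_in_klein self_in_korbit] kdist_P0_c2[OF e]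
    by simp
  also have "\<dots> = (if y0 = 0 \<or> x1 = 0 then 4 else 3)"
    unfolding nearest_lifts_c2[OF e] using a b y0 x1_if_y0_eq_0 by auto
  finally show ?thesis .
qed

lemma halfturn_P0: "halfturn a b ` P0 = P0"
  using ksymmetry_image_korbit[OF ksymmetry_halfturn, of a b "(0, y0)"] P0_lifts(3) korbit_eq_iff
  by simp

lemma halfturn_korbit_c2: "halfturn a b ` korbit a b c2 = korbit a b c1"
  by (simp add: ksymmetry_image_korbit[OF ksymmetry_halfturn] c1_def c2_def algebra_simps)

lemma kdist_P0_c1: "kdist P0 (korbit a b c1) = kdist P0 (korbit a b c2)"
  using ksymmetry_kdist[OF ksymmetry_halfturn, of a b P0 "korbit a b c2"]
  by (simp add: halfturn_P0 halfturn_korbit_c2)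

lemma card_ksegments_c1:
  "card (ksegments a b P0 (korbit a b c1)) = card (ksegments a b P0 (korbit a b c2))"
  using ksymmetry_card_ksegments[OF a b ksymmetry_halfturn korbit_in_klein korbit_in_klein,
      of "(0, y0)" c2]
  by (simp add: halfturn_P0 halfturn_korbit_c2)

lemma korbit_c1_eq_c2: "y0 = 0 \<or> x1 = 0 \<Longrightarrow> korbit a b c1 = korbit a b c2"
proof (elim disjE)
  assume y: "y0 = 0"
  have "c1 = c2" unfolding c1_def c2_def using x1_if_y0_eq_0[OF y] y by simp
  then show ?thesis by simp
next
  assume "x1 = 0"
  then have "c1 = kelem a b 0 1 True c2" by (simp add: c1_def c2_def)
  then show ?thesis by simp
qed

lemma korbit_c1_ne_c2:
  assumes "0 < x1" "0 < y0"
  shows "korbit a b c1 \<noteq> korbit a b c2"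
proof
  assume "korbit a b c1 = korbit a b c2"
  then obtain k m s where c: "c1 = kelem a b k m s c2" using korbit_eq_iff mem_korbit_iff by metis
  show False
  proof (cases s)
    case True
    then have "of_int (- k) * a = x1" using c by (simp add: c1_def c2_def algebra_simps)
    then show False using of_int_mult_not_between[OF a, of "- k"] assms(1) x1_le by auto
  next
    case False
    then have "of_int (- m) * b = 2 * y0" using c by (simp add: c1_def c2_def algebra_simps)
    then show False using of_int_mult_not_between[OF b, of "- m"] assms(2) y0 by auto
  qed
qed

lemma kfar_P0_acute:
  assumes e: "0 \<le> e"
  shows "kfar a b P0 = {korbit a b c1, korbit a b c2}"
proof -
  have "kfar a b P0 = korbit a b ` {c1, c2}"
  proof (rule kfar_korbit_eq)
    show "kdist P0 (korbit a b w) \<le> r1" for w by (rule kdist_le_r1(1))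
    show "kdist P0 (korbit a b c) = r1" if "c \<in> {c1, c2}" for c
      using that kdist_P0_c1 kdist_P0_c2[OF e] by auto
    show "\<exists>c\<in>{c1, c2}. w \<in> korbit a b c" if "r1 \<le> kdist P0 (korbit a b w)" for w
      using kdist_le_r1(2)[OF that] by blast
  qed simp
  then show ?thesis by simp
qed

lemma far_points_acute_degenerate:
  assumes "y0 = 0 \<or> e = 0"
  shows "card (kfar a b P0) = 1 \<and> card (kfarn a b 4 P0) = 1"
proof -
  have e: "0 \<le> e" using assms unfolding e_def by auto
  have far: "kfar a b P0 = {korbit a b c2}"
    using kfar_P0_acute[OF e] korbit_c1_eq_c2 assms x1_eq_0_iff by auto
  moreover have "kfarn a b 4 P0 = {korbit a b c2}"
    using card_ksegments_c2[OF e] assms x1_eq_0_iff by (intro kfarn_eq_kfar[OF far]) auto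
  ultimately show ?thesis by simp
qed

lemma far_points_acute:
  assumes "0 < e" "y0 \<noteq> 0"
  shows "card (kfar a b P0) = 2 \<and> card (kfarn a b 3 P0) = 2"
proof -
  have x1: "0 < x1" using assms(1) a by (simp add: x1_def)
  have far: "kfar a b P0 = {korbit a b c1, korbit a b c2}" using kfar_P0_acute assms by simp
  have "card (ksegments a b P0 (korbit a b c2)) = 3"
    using card_ksegments_c2 assms x1 by simp
  then have "kfarn a b 3 P0 = {korbit a b c1, korbit a b c2}"
    using card_ksegments_c1 by (intro kfarn_eq_kfar[OF far]) auto
  then show ?thesis using far korbit_c1_ne_c2[OF x1] assms y0 by simp
qed

section \<open>The case of an obtuse triangulation\<close>

text \<open>Circumcentres and circumradii of the isosceles triangles (0, y0), (2a, y0), (a, b - y0)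
  and (0, y0 + b), (2a, y0 + b), (a, b - y0).\<close>
definition rU :: real where "rU = ((b - 2 * y0)\<^sup>2 + a\<^sup>2) / (2 * (b - 2 * y0))"
definition rD :: real where "rD = ((2 * y0)\<^sup>2 + a\<^sup>2) / (2 * (2 * y0))"
definition cU :: "real \<times> real" where "cU = (a, b - y0 - rU)"
definition cD :: "real \<times> real" where "cD = (a, b - y0 + rD)"

lemma obtuse_circumradii:
  assumes e: "e < 0"
  shows y0_pos: "0 < y0"
    and rU_circle: "a\<^sup>2 + (b - 2 * y0 - rU)\<^sup>2 = rU\<^sup>2"
    and rD_circle: "a\<^sup>2 + (2 * y0 - rD)\<^sup>2 = rD\<^sup>2"
    and rU_bounds: "0 < b - 2 * y0 - rU" "b - 2 * y0 - rU < b / 2" "0 < rU" "rU < b / 2"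
    and rD_bounds: "0 < rD" "rD \<le> rU"
    and rD_eq_rU_iff: "rD = rU \<longleftrightarrow> y0 = b / 4"
proof -
  define h g where "h = b - 2 * y0" and "g = 2 * y0"
  have agh: "a\<^sup>2 < g * h" using e by (simp add: e_def g_def h_def)
  have h: "b / 2 \<le> h" "h \<le> b" using y0 by (simp_all add: h_def)
  have a2: "0 < a\<^sup>2" using a by simp
  have gh_pos: "0 < g * h" using agh a2 by linarith
  then have g: "0 < g" using h b by (simp add: zero_less_mult_iff)
  then show "0 < y0" by (simp add: g_def)
  have gh: "g \<le> h" using y0 by (simp add: g_def h_def)
  have RU: "2 * h * rU = a\<^sup>2 + h\<^sup>2" and RD: "2 * g * rD = a\<^sup>2 + g\<^sup>2"
    using h b g by (simp_all add: rU_def rD_def h_def g_def)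
  show "a\<^sup>2 + (b - 2 * y0 - rU)\<^sup>2 = rU\<^sup>2" "a\<^sup>2 + (2 * y0 - rD)\<^sup>2 = rD\<^sup>2"
    using RU RD unfolding h_def g_def by (simp_all add: power2_eq_square algebra_simps)
  have "g * h \<le> h * h" using gh h b by (intro mult_right_mono) auto
  then have "a\<^sup>2 < h\<^sup>2" using agh by (simp add: power2_eq_square)
  then have "0 < 2 * h * (h - rU)" "2 * h * (h - rU) < h * h"
    using RU a2 by (simp_all add: power2_eq_square algebra_simps)
  then show "0 < b - 2 * y0 - rU" "b - 2 * y0 - rU < b / 2"
    using h b unfolding h_def[symmetric] by (simp_all add: zero_less_mult_iff)
  have "0 < 2 * h * rU" "0 < 2 * g * rD" using RU RD a2 by (simp_all add: add_pos_nonneg)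
  then show "0 < rU" "0 < rD" using h b g by (simp_all add: zero_less_mult_iff)
  have "2 * h * rU < 2 * h * (b / 2)"
    using RU agh unfolding h_def g_def by (simp add: power2_eq_square algebra_simps)
  then show "rU < b / 2" using h b by simp
  have "2 * g * h * (rU - rD) = g * (2 * h * rU) - h * (2 * g * rD)" by (simp add: algebra_simps)
  also have "\<dots> = (h - g) * (g * h - a\<^sup>2)"
    unfolding RU RD by (simp add: power2_eq_square algebra_simps)
  finally have key: "2 * g * h * (rU - rD) = (h - g) * (g * h - a\<^sup>2)" .
  then have "0 \<le> 2 * g * h * (rU - rD)" using gh agh by simp
  then show "rD \<le> rU" using gh_pos by (simp add: zero_le_mult_iff)
  have "rD = rU \<longleftrightarrow> 2 * g * h * (rU - rD) = 0" using gh_pos by auto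
  also have "\<dots> \<longleftrightarrow> y0 = b / 4" using key agh by (auto simp: h_def g_def)
  finally show "rD = rU \<longleftrightarrow> y0 = b / 4" .
qed

lemma circumcircles_obtuse:
  assumes e: "e < 0"
  shows "dist (0, y0) cU = rU" "dist (2 * a, y0) cU = rU" "dist (a, b - y0) cU = rU"
    "dist (0, y0) (0, y0 + rU) = rU" "dist (a, b - y0) (0, y0 + rU) = rU"
    "dist (- a, b - y0) (0, y0 + rU) = rU"
    "dist (- a, b - y0) (0, y0 + b - rD) = rD" "dist (a, b - y0) (0, y0 + b - rD) = rD"
    "dist (0, y0 + b) (0, y0 + b - rD) = rD"
    "dist (0, y0 + b) cD = rD" "dist (2 * a, y0 + b) cD = rD" "dist (a, b - y0) cD = rD"
  using rU_circle[OF e] rD_circle[OF e] rU_bounds(3)[OF e] rD_bounds(1)[OF e]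
  by (auto simp: cU_def cD_def power2_eq_square algebra_simps intro!: dist_eq_of_sq)
    (simp_all add: dist_Pair_Pair dist_real_def)

lemma rectangle_cover_obtuse:
  assumes e: "e < 0" and x: "0 \<le> x" "x \<le> a" and y: "y0 \<le> y" "y \<le> y0 + b"
  shows "(x, y) \<in> convex hull {(0, y0), (2 * a, y0), (a, b - y0)}
    \<or> (x, y) \<in> convex hull {(0, y0), (a, b - y0), (- a, b - y0)}
    \<or> (x, y) \<in> convex hull {(- a, b - y0), (a, b - y0), (0, y0 + b)}
    \<or> (x, y) \<in> convex hull {(0, y0 + b), (a, b - y0), (2 * a, y0 + b)}"
proof -
  \<comment> \<open>L1 and L2 vanish on the lines through (a, b - y0) and (0, y0), resp. (0, y0 + b).\<close>
  define L1 where "L1 = x * (b - 2 * y0) - a * (y - y0)"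
  define L2 where "L2 = a * (y0 + b - y) - 2 * y0 * x"
  have pos: "0 < a * (b - 2 * y0)" "0 < a * y0" using a b y0 y0_pos[OF e] by simp_all
  consider "y \<le> b - y0" "0 \<le> L1" | "y \<le> b - y0" "L1 \<le> 0" | "b - y0 \<le> y" "0 \<le> L2"
    | "b - y0 \<le> y" "L2 \<le> 0"
    by linarith
  then show ?thesis
  proof cases
    case 1
    have "(x, y) \<in> convex hull {(0, y0), (2 * a, y0), (a, b - y0)}"
    proof (rule in_convex_hull_triangle_if_orient)
      show "0 \<le> orient (x, y) (2 * a, y0) (a, b - y0)"
        by (rule orient_nonneg_by[of _ _ _ "2 * a - x" "b - y0 - y" "a - x" "y - y0"])
          (use x y 1 a in \<open>simp_all add: orient_def algebra_simps\<close>)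
      show "0 \<le> orient (0, y0) (x, y) (a, b - y0)"
        using 1 by (simp add: orient_def L1_def algebra_simps)
      show "0 \<le> orient (0, y0) (2 * a, y0) (x, y)"
        by (rule orient_nonneg_by[of _ _ _ "2 * a" "y - y0" 0 0])
          (use y a in \<open>simp_all add: orient_def algebra_simps\<close>)
      show "0 < orient (0, y0) (2 * a, y0) (a, b - y0)"
        using pos by (simp add: orient_def algebra_simps)
    qed
    then show ?thesis by blast
  next
    case 2
    have "(x, y) \<in> convex hull {(0, y0), (a, b - y0), (- a, b - y0)}"
    proof (rule in_convex_hull_triangle_if_orient)
      show "0 \<le> orient (x, y) (a, b - y0) (- a, b - y0)"
        by (rule orient_nonneg_by[of _ _ _ "2 * a" "b - y0 - y" 0 0])
          (use 2 a in \<open>simp_all add: orient_def algebra_simps\<close>)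
      show "0 \<le> orient (0, y0) (x, y) (- a, b - y0)"
        by (rule orient_nonneg_by[of _ _ _ x "b - 2 * y0" a "y - y0"])
          (use x y y0 a in \<open>simp_all add: orient_def algebra_simps\<close>)
      show "0 \<le> orient (0, y0) (a, b - y0) (x, y)"
        using 2 by (simp add: orient_def L1_def algebra_simps)
      show "0 < orient (0, y0) (a, b - y0) (- a, b - y0)"
        using pos by (simp add: orient_def algebra_simps)
    qed
    then show ?thesis by blast
  next
    case 3
    have "(x, y) \<in> convex hull {(- a, b - y0), (a, b - y0), (0, y0 + b)}"
    proof (rule in_convex_hull_triangle_if_orient)
      show "0 \<le> orient (x, y) (a, b - y0) (0, y0 + b)"
        using 3 by (simp add: orient_def L2_def algebra_simps)
      show "0 \<le> orient (- a, b - y0) (x, y) (0, y0 + b)"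
        by (rule orient_nonneg_by[of _ _ _ "2 * y0" x a "y0 + b - y"])
          (use x y y0 a in \<open>simp_all add: orient_def algebra_simps\<close>)
      show "0 \<le> orient (- a, b - y0) (a, b - y0) (x, y)"
        by (rule orient_nonneg_by[of _ _ _ "2 * a" "y - (b - y0)" 0 0])
          (use 3 a in \<open>simp_all add: orient_def algebra_simps\<close>)
      show "0 < orient (- a, b - y0) (a, b - y0) (0, y0 + b)"
        using pos by (simp add: orient_def algebra_simps)
    qed
    then show ?thesis by blast
  next
    case 4
    have "(x, y) \<in> convex hull {(0, y0 + b), (a, b - y0), (2 * a, y0 + b)}"
    proof (rule in_convex_hull_triangle_if_orient)
      show "0 \<le> orient (x, y) (a, b - y0) (2 * a, y0 + b)"
        by (rule orient_nonneg_by[of _ _ _ "a - x" "y0 + b - y" "2 * a - x" "y - (b - y0)"])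
          (use x y 4 a in \<open>simp_all add: orient_def algebra_simps\<close>)
      show "0 \<le> orient (0, y0 + b) (x, y) (2 * a, y0 + b)"
        by (rule orient_nonneg_by[of _ _ _ "2 * a" "y0 + b - y" 0 0])
          (use y a in \<open>simp_all add: orient_def algebra_simps\<close>)
      show "0 \<le> orient (0, y0 + b) (a, b - y0) (x, y)"
        using 4 by (simp add: orient_def L2_def algebra_simps)
      show "0 < orient (0, y0 + b) (a, b - y0) (2 * a, y0 + b)"
        using pos by (simp add: orient_def algebra_simps)
    qed
    then show ?thesis by blast
  qed
qed

lemma kdist_le_rU:
  assumes e: "e < 0"
  shows "kdist P0 (korbit a b w) \<le> rU"
    and "rU \<le> kdist P0 (korbit a b w) \<Longrightarrow> w \<in> korbit a b cU \<or> y0 = b / 4 \<and> w \<in> korbit a b cD"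
proof -
  obtain x y where xy: "(x, y) \<in> korbit a b w" "0 \<le> x" "x \<le> a" "y0 \<le> y" "y \<le> y0 + b"
    by (rule rectangle_representative)
  have w: "korbit a b w = korbit a b (x, y)" using xy(1) korbit_eq_iff by blast
  then have w_in: "w \<in> korbit a b (x, y)" using self_in_korbit by metis
  have cU': "(0, y0 + rU) \<in> korbit a b cU"
    using kelem_in_korbit[of a b "-1" 1 True cU] by (simp add: cU_def)
  have cD': "(0, y0 + b - rD) \<in> korbit a b cD"
    using kelem_in_korbit[of a b "-1" 2 True cD] by (simp add: cD_def algebra_simps)
  note r = order_refl[of rU] rD_bounds(2)[OF e] rD_eq_rU_iff[OF e]
  note bound = kdist_bound_from_triangle[where R = rU, OF _ _ _ _ _ _ _ _ w_in]
  from rectangle_cover_obtuse[OF e xy(2-5)]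
  have "kdist P0 (korbit a b (x, y)) \<le> rU \<and> (rU \<le> kdist P0 (korbit a b (x, y)) \<longrightarrow>
    w \<in> korbit a b cU \<or> y0 = b / 4 \<and> w \<in> korbit a b cD)"
  proof (elim disjE)
    assume hull: "(x, y) \<in> convex hull {(0, y0), (2 * a, y0), (a, b - y0)}"
    show ?thesis
      using bound[OF hull P0_lifts(1,6,3) circumcircles_obtuse(1-3)[OF e] r(1) self_in_korbit]
      by blast
  next
    assume hull: "(x, y) \<in> convex hull {(0, y0), (a, b - y0), (- a, b - y0)}"
    show ?thesis
      using bound[OF hull P0_lifts(1,3,7) circumcircles_obtuse(4-6)[OF e] r(1) cU'] by blast
  next
    assume hull: "(x, y) \<in> convex hull {(- a, b - y0), (a, b - y0), (0, y0 + b)}"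
    show ?thesis using bound[OF hull P0_lifts(7,3,4) circumcircles_obtuse(7-9)[OF e] r(2) cD'] r(3)
      by blast
  next
    assume hull: "(x, y) \<in> convex hull {(0, y0 + b), (a, b - y0), (2 * a, y0 + b)}"
    show ?thesis
      using bound[OF hull P0_lifts(4,3,8) circumcircles_obtuse(10,12,11)[OF e] r(2) self_in_korbit]
        r(3)
      by blast
  qed
  then show "kdist P0 (korbit a b w) \<le> rU"
    and "rU \<le> kdist P0 (korbit a b w) \<Longrightarrow> w \<in> korbit a b cU \<or> y0 = b / 4 \<and> w \<in> korbit a b cD"
    unfolding w by blast+
qed

lemma sqdist_cU_ge:
  assumes e: "e < 0" and u: "u \<in> P0"
  shows "rU\<^sup>2 \<le> (fst u - a)\<^sup>2 + (snd u - (b - y0 - rU))\<^sup>2"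
    and "(fst u - a)\<^sup>2 + (snd u - (b - y0 - rU))\<^sup>2 = rU\<^sup>2 \<Longrightarrow> u \<in> {(0, y0), (2 * a, y0), (a, b - y0)}"
proof -
  have "rU\<^sup>2 \<le> (fst u - a)\<^sup>2 + (snd u - (b - y0 - rU))\<^sup>2 \<and>
    ((fst u - a)\<^sup>2 + (snd u - (b - y0 - rU))\<^sup>2 = rU\<^sup>2 \<longrightarrow> u \<in> {(0, y0), (2 * a, y0), (a, b - y0)})"
  proof (cases rule: P0_cases[OF u])
    case (1 k m)
    have "(fst u - a)\<^sup>2 + (snd u - (b - y0 - rU))\<^sup>2
        = (of_int k * (2 * a) - a)\<^sup>2 + (of_int m * b - (b - 2 * y0 - rU))\<^sup>2"
      using 1 by (simp add: algebra_simps)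
    then show ?thesis
      using sum_sq_int_mult_diff_ge[of "2 * a" a b "b - 2 * y0 - rU" k m] 1 a b rU_bounds(1,2)[OF e]
      unfolding rU_circle[OF e] by auto
  next
    case (2 k m)
    have "(fst u - a)\<^sup>2 + (snd u - (b - y0 - rU))\<^sup>2
        = (of_int k * (2 * a) - 0)\<^sup>2 + (of_int (1 - m) * b - rU)\<^sup>2"
      using 2 by (simp add: power2_eq_square algebra_simps)
    then show ?thesis
      using sum_sq_int_mult_diff_ge[of "2 * a" 0 b rU k "1 - m"] 2 a b rU_bounds(3,4)[OF e] by auto
  qed
  then show "rU\<^sup>2 \<le> (fst u - a)\<^sup>2 + (snd u - (b - y0 - rU))\<^sup>2"
    and "(fst u - a)\<^sup>2 + (snd u - (b - y0 - rU))\<^sup>2 = rU\<^sup>2 \<Longrightarrow> u \<in> {(0, y0), (2 * a, y0), (a, b - y0)}"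
    by blast+
qed

lemma nearest_lifts_cU:
  assumes e: "e < 0"
  shows "{u \<in> P0. dist u cU = rU} = {(0, y0), (2 * a, y0), (a, b - y0)}"
proof (intro equalityI subsetI)
  fix u assume "u \<in> {u \<in> P0. dist u cU = rU}"
  then have u: "u \<in> P0" and "sqrt ((fst u - a)\<^sup>2 + (snd u - (b - y0 - rU))\<^sup>2) = rU"
    by (auto simp: dist_eq_sqrt cU_def)
  then have "(fst u - a)\<^sup>2 + (snd u - (b - y0 - rU))\<^sup>2 = rU\<^sup>2"
    by (metis add_nonneg_nonneg real_sqrt_pow2 zero_le_power2)
  from sqdist_cU_ge(2)[OF e u this] show "u \<in> {(0, y0), (2 * a, y0), (a, b - y0)}" .
qed (use P0_lifts circumcircles_obtuse[OF e] in auto)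

lemma dist_P0_cU_ge: "e < 0 \<Longrightarrow> u \<in> P0 \<Longrightarrow> rU \<le> dist u cU"
  using sqdist_cU_ge(1) rU_bounds(3) by (simp add: dist_eq_sqrt cU_def real_le_rsqrt)

lemma kdist_P0_cU: "e < 0 \<Longrightarrow> kdist P0 (korbit a b cU) = rU"
  using kdist_le_rU(1) kdist_greatest[OF dist_P0_cU_ge] by (metis antisym)

lemma card_ksegments_cU:
  assumes e: "e < 0"
  shows "card (ksegments a b P0 (korbit a b cU)) = 3"
proof -
  have "card (ksegments a b P0 (korbit a b cU)) = card {u \<in> P0. dist u cU = rU}"
    using card_ksegments[OF a b korbit_in_klein korbit_in_klein self_in_korbit] kdist_P0_cU[OF e]
    by simp
  also have "\<dots> = 3" unfolding nearest_lifts_cU[OF e] using a b y0 by auto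
  finally show ?thesis .
qed

lemma vreflect_P0:
  assumes "y0 = b / 4"
  shows "vreflect b ` P0 = P0"
proof -
  have "b / 2 - y0 = y0" using assms by simp
  then show ?thesis by (simp add: ksymmetry_image_korbit[OF ksymmetry_vreflect])
qed

lemma vreflect_korbit_cU:
  assumes e: "e < 0" and sym: "y0 = b / 4"
  shows "vreflect b ` korbit a b cU = korbit a b cD"
proof -
  have "rD = rU" using rD_eq_rU_iff[OF e] sym by blast
  moreover have "b - y0 = b / 2 + y0" using sym by simp
  ultimately have "cD = kelem a b 0 1 False (vreflect b cU)" unfolding cU_def cD_def by simp
  then show ?thesis by (simp add: ksymmetry_image_korbit[OF ksymmetry_vreflect])
qed

lemma kdist_P0_cD:
  assumes "e < 0" "y0 = b / 4"
  shows "kdist P0 (korbit a b cD) = kdist P0 (korbit a b cU)"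
  using ksymmetry_kdist[OF ksymmetry_vreflect[of a b], of P0 "korbit a b cU"]
  by (simp add: vreflect_P0[OF assms(2)] vreflect_korbit_cU[OF assms])

lemma card_ksegments_cD:
  assumes "e < 0" "y0 = b / 4"
  shows "card (ksegments a b P0 (korbit a b cD)) = card (ksegments a b P0 (korbit a b cU))"
  using ksymmetry_card_ksegments[OF a b ksymmetry_vreflect korbit_in_klein korbit_in_klein,
      of "(0, y0)" cU]
  by (simp add: vreflect_P0[OF assms(2)] vreflect_korbit_cU[OF assms])

lemma korbit_cU_ne_cD:
  assumes e: "e < 0" and sym: "y0 = b / 4"
  shows "korbit a b cU \<noteq> korbit a b cD"
proof
  assume "korbit a b cU = korbit a b cD"
  then obtain k m s where c: "cD = kelem a b k m s cU" using korbit_eq_iff mem_korbit_iff by metis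
  show False
  proof (cases s)
    case True
    then have "of_int (2 * k + 1) * a = 0" using c by (simp add: cU_def cD_def)
    moreover have "2 * k + 1 \<noteq> 0" by presburger
    ultimately show False using a by simp
  next
    case False
    have "rD = rU" using rD_eq_rU_iff[OF e] sym by blast
    then have "of_int m * b = 2 * rU" using c False by (simp add: cU_def cD_def)
    then show False using of_int_mult_not_between[OF b, of m] rU_bounds(3,4)[OF e] by auto
  qed
qed

lemma far_points_obtuse:
  assumes e: "e < 0" and "y0 < b / 4"
  shows "card (kfar a b P0) = 1 \<and> card (kfarn a b 3 P0) = 1"
proof -
  have "kfar a b P0 = korbit a b ` {cU}"
  proof (rule kfar_korbit_eq)
    show "kdist P0 (korbit a b w) \<le> rU" for w by (rule kdist_le_rU(1)[OF e])
    show "kdist P0 (korbit a b c) = rU" if "c \<in> {cU}" for c using that kdist_P0_cU[OF e] by simp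
    show "\<exists>c\<in>{cU}. w \<in> korbit a b c" if "rU \<le> kdist P0 (korbit a b w)" for w
      using kdist_le_rU(2)[OF e that] assms(2) by auto
  qed simp
  then have far: "kfar a b P0 = {korbit a b cU}" by simp
  moreover have "kfarn a b 3 P0 = {korbit a b cU}"
    using card_ksegments_cU[OF e] by (intro kfarn_eq_kfar[OF far]) auto
  ultimately show ?thesis by simp
qed

lemma far_points_obtuse_symmetric:
  assumes e: "e < 0" and sym: "y0 = b / 4"
  shows "card (kfar a b P0) = 2 \<and> card (kfarn a b 3 P0) = 2"
proof -
  have "kfar a b P0 = korbit a b ` {cU, cD}"
  proof (rule kfar_korbit_eq)
    show "kdist P0 (korbit a b w) \<le> rU" for w by (rule kdist_le_rU(1)[OF e])
    show "kdist P0 (korbit a b c) = rU" if "c \<in> {cU, cD}" for c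
      using that kdist_P0_cU[OF e] kdist_P0_cD[OF e sym] by auto
    show "\<exists>c\<in>{cU, cD}. w \<in> korbit a b c" if "rU \<le> kdist P0 (korbit a b w)" for w
      using kdist_le_rU(2)[OF e that] by auto
  qed simp
  then have far: "kfar a b P0 = {korbit a b cU, korbit a b cD}" by simp
  moreover have "kfarn a b 3 P0 = {korbit a b cU, korbit a b cD}"
    using card_ksegments_cU[OF e] card_ksegments_cD[OF e sym] by (intro kfarn_eq_kfar[OF far]) auto
  ultimately show ?thesis using korbit_cU_ne_cD[OF e sym] by simp
qed

end

lemma lambda_regimes:
  fixes a b l :: real
  assumes a: "0 < a" and b: "0 < b" and l: "0 \<le> l" "l \<le> 1 / 2"
  defines "l0 \<equiv> 1 / 2 - sqrt (1 / 4 - a\<^sup>2 / b\<^sup>2)"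
  shows "b < 2 * a \<Longrightarrow> b\<^sup>2 * l * (1 - l) < a\<^sup>2"
    and "b = 2 * a \<Longrightarrow> b\<^sup>2 * l * (1 - l) \<le> a\<^sup>2 \<and> (b\<^sup>2 * l * (1 - l) = a\<^sup>2 \<longleftrightarrow> l = 1 / 2)"
    and "2 * a < b \<Longrightarrow> l0 < 1 / 2 \<and> (b\<^sup>2 * l * (1 - l) < a\<^sup>2 \<longleftrightarrow> l < l0)
      \<and> (b\<^sup>2 * l * (1 - l) = a\<^sup>2 \<longleftrightarrow> l = l0)"
proof -
  have square: "b\<^sup>2 * l * (1 - l) = b\<^sup>2 * (1 / 4 - (1 / 2 - l)\<^sup>2)"
    by (simp add: power2_eq_square algebra_simps)
  show "b\<^sup>2 * l * (1 - l) < a\<^sup>2" if "b < 2 * a"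
  proof -
    have "b\<^sup>2 < (2 * a)\<^sup>2" using that b by (intro power_strict_mono) auto
    moreover have "b\<^sup>2 * l * (1 - l) \<le> b\<^sup>2 / 4" unfolding square by (simp add: algebra_simps)
    ultimately show ?thesis by (simp add: power_mult_distrib)
  qed
  show "b\<^sup>2 * l * (1 - l) \<le> a\<^sup>2 \<and> (b\<^sup>2 * l * (1 - l) = a\<^sup>2 \<longleftrightarrow> l = 1 / 2)" if "b = 2 * a"
  proof -
    have "b\<^sup>2 * l * (1 - l) = a\<^sup>2 - b\<^sup>2 * (1 / 2 - l)\<^sup>2"
      unfolding square that by (simp add: power2_eq_square algebra_simps)
    then show ?thesis using b by simp
  qed
  show "l0 < 1 / 2 \<and> (b\<^sup>2 * l * (1 - l) < a\<^sup>2 \<longleftrightarrow> l < l0) \<and> (b\<^sup>2 * l * (1 - l) = a\<^sup>2 \<longleftrightarrow> l = l0)"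
    if "2 * a < b"
  proof -
    define s where "s = sqrt (1 / 4 - a\<^sup>2 / b\<^sup>2)"
    have "(2 * a)\<^sup>2 < b\<^sup>2" using that a by (intro power_strict_mono) auto
    then have ab: "a\<^sup>2 / b\<^sup>2 < 1 / 4" using b by (simp add: power_mult_distrib divide_less_eq)
    then have s: "0 < s" "s\<^sup>2 = 1 / 4 - a\<^sup>2 / b\<^sup>2" by (simp_all add: s_def)
    then have a2: "a\<^sup>2 = b\<^sup>2 * (1 / 4 - s\<^sup>2)" using b by simp
    have "b\<^sup>2 * l * (1 - l) < a\<^sup>2 \<longleftrightarrow> s\<^sup>2 < (1 / 2 - l)\<^sup>2" unfolding square a2 using b by simp
    also have "\<dots> \<longleftrightarrow> s < 1 / 2 - l"
    proof -
      have "(1 / 2 - l)\<^sup>2 \<le> s\<^sup>2 \<longleftrightarrow> 1 / 2 - l \<le> s" using s l by (intro power_mono_iff) auto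
      then show ?thesis by (meson not_le)
    qed
    finally have lt: "b\<^sup>2 * l * (1 - l) < a\<^sup>2 \<longleftrightarrow> l < l0" unfolding l0_def s_def[symmetric] by auto
    have "b\<^sup>2 * l * (1 - l) = a\<^sup>2 \<longleftrightarrow> s\<^sup>2 = (1 / 2 - l)\<^sup>2" unfolding square a2 using b by auto
    also have "\<dots> \<longleftrightarrow> s = 1 / 2 - l" using s l by (intro power2_eq_iff_nonneg) auto
    finally have eq: "b\<^sup>2 * l * (1 - l) = a\<^sup>2 \<longleftrightarrow> l = l0" unfolding l0_def s_def[symmetric] by auto
    show ?thesis using lt eq s unfolding l0_def s_def[symmetric] by simp
  qed
qed

theorem mainTheorem4:
  fixes a b :: real and P :: "(real \<times> real) set"
  assumes "a > 0" and "b > 0" and "P \<in> klein a b"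
  defines "lam \<equiv> 2 * kdist_main a b P / b"
      and "lam0 \<equiv> 1/2 - sqrt (1/4 - a\<^sup>2 / b\<^sup>2)"
  shows "(0 \<le> lam \<and> lam \<le> 1/2)
    \<and> (b < 2 * a \<longrightarrow>
         (lam = 0 \<longrightarrow> card (kfar a b P) = 1 \<and> card (kfarn a b 4 P) = 1)
       \<and> (lam \<noteq> 0 \<longrightarrow> card (kfar a b P) = 2 \<and> card (kfarn a b 3 P) = 2))
    \<and> (b = 2 * a \<longrightarrow>
         ((lam = 0 \<or> lam = 1/2) \<longrightarrow> card (kfar a b P) = 1 \<and> card (kfarn a b 4 P) = 1)
       \<and> (lam \<noteq> 0 \<and> lam \<noteq> 1/2 \<longrightarrow> card (kfar a b P) = 2 \<and> card (kfarn a b 3 P) = 2))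
    \<and> (b > 2 * a \<longrightarrow>
         (lam = 0 \<longrightarrow> card (kfar a b P) = 1 \<and> card (kfarn a b 4 P) = 1)
       \<and> (0 < lam \<and> lam < lam0 \<longrightarrow> card (kfar a b P) = 2 \<and> card (kfarn a b 3 P) = 2)
       \<and> (lam = lam0 \<longrightarrow> card (kfar a b P) = 1 \<and> card (kfarn a b 4 P) = 1)
       \<and> (lam0 < lam \<and> lam < 1/2 \<longrightarrow> card (kfar a b P) = 1 \<and> card (kfarn a b 3 P) = 1)
       \<and> (lam = 1/2 \<longrightarrow> card (kfar a b P) = 2 \<and> card (kfarn a b 3 P) = 2))"
proof -
  obtain \<phi> \<psi> y0 where \<phi>: "ksymmetry a b \<phi> \<psi>" and y0: "0 \<le> y0" "y0 \<le> b / 4"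
    and P: "\<phi> ` P = korbit a b (0, y0)"
    using klein_normal_form[OF assms(1-3)] .
  interpret normal_point a b y0 using assms(1,2) y0 by unfold_locales
  have lam: "lam = 2 * y0 / b"
    using ksymmetry_kdist_main[OF \<phi>, of P] kdist_main_P0 P by (simp add: lam_def)
  have range: "0 \<le> lam" "lam \<le> 1 / 2" using y0 assms(2) by (simp_all add: lam field_simps)
  have lam_y0: "lam = 0 \<longleftrightarrow> y0 = 0" "lam = 1 / 2 \<longleftrightarrow> y0 = b / 4" "lam < 1 / 2 \<longleftrightarrow> y0 < b / 4"
    using assms(2) by (auto simp: lam field_simps)
  have far: "card (kfar a b P) = card (kfar a b P0)"
    "card (kfarn a b n P) = card (kfarn a b n P0)" for n
    using ksymmetry_card_kfar[OF \<phi>, of P] ksymmetry_card_kfarn[OF assms(1,2) \<phi> assms(3)] P by metis+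
  define q where "q = b\<^sup>2 * lam * (1 - lam)"
  have e: "e = a\<^sup>2 - q" unfolding q_def lam by (rule e_lambda)
  note regimes = lambda_regimes[OF assms(1,2) range, folded lam0_def q_def]
  note counts = far_points_acute_degenerate far_points_acute
    far_points_obtuse far_points_obtuse_symmetric
  show ?thesis
    unfolding far using range regimes counts lam_y0 e by auto
qed

end
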